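(* Let $W$ be a $k[G_m]$-module and suppose $0\to U\to M(W)\to V\to0$ is an exact sequence of $\mathrm{FI}_G$-modules in which $U$ is generated in degree $\le m$. Then $U$ and $V$ are both relatively projective.
   Context: Fix a commutative ring $k$ and a group $G$. $\mathrm{FI}_G$ is the category with objects $[n]$ ($n\ge0$) and morphisms $[n]\to[m]$ the pairs $(f,g)$ with $f$ injective and $g:[n]\to G$ a map of sets; composition $(f,g)\circ(f',g')=(f\circ f',h)$, $h(x)=g'(x)\,g(f'(x))$. $G_n=\mathfrak S_n\wr G=\mathrm{Aut}_{\mathrm{FI}_G}([n])$. An $\mathrm{FI}_G$-module is a functor $V:\mathrm{FI}_G\to\mathrm{Mod}_k$. For a $k[G_n]$-module $W$, $M(W)$ is the $\mathrm{FI}_G$-module with $M(W)_p=W\otimes_{k[G_n]}k[\mathrm{Hom}_{\mathrm{FI}_G}([n],[p])]$, morphisms acting by postcomposition; $M(n):=M(k[G_n])$; modules of the form $\bigoplus_n M(W_n)$ are relatively projective. $V$ is generated in degree $\le m$ if there is a surjection $\bigoplus M(n_i)\to V$ with all $n_i\le m$. *)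

theory Defs
  imports "HOL-Algebra.Module" "HOL-Algebra.Group"
begin

text \<open>A morphism [n] -> [m] of FI_G is a pair (f,g): f injective [n] -> [m],
  g : [n] -> G, where [n] = {0..<n}.  Both components are extensional
  (undefined outside [n]).\<close>

type_synonym 'g fimor = "(nat \<Rightarrow> nat) \<times> (nat \<Rightarrow> 'g)"

definition fimor :: "'g monoid \<Rightarrow> nat \<Rightarrow> nat \<Rightarrow> 'g fimor set" where
  "fimor G n m = {(f, g). f \<in> {..<n} \<rightarrow>\<^sub>E {..<m} \<and> inj_on f {..<n}
                          \<and> g \<in> {..<n} \<rightarrow>\<^sub>E carrier G}"

definition ficomp :: "'g monoid \<Rightarrow> nat \<Rightarrow> 'g fimor \<Rightarrow> 'g fimor \<Rightarrow> 'g fimor" where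
  "ficomp G n \<phi> \<psi> =
     (restrict (fst \<phi> \<circ> fst \<psi>) {..<n},
      restrict (\<lambda>x. snd \<psi> x \<otimes>\<^bsub>G\<^esub> snd \<phi> (fst \<psi> x)) {..<n})"

definition fiid :: "'g monoid \<Rightarrow> nat \<Rightarrow> 'g fimor" where
  "fiid G n = (restrict id {..<n}, restrict (\<lambda>_. \<one>\<^bsub>G\<^esub>) {..<n})"

definition linmap :: "'k ring \<Rightarrow> ('k, 'a) module \<Rightarrow> ('k, 'b) module \<Rightarrow> ('a \<Rightarrow> 'b) \<Rightarrow> bool" where
  "linmap R M N f \<longleftrightarrow> f \<in> carrier M \<rightarrow> carrier N
     \<and> (\<forall>x\<in>carrier M. \<forall>y\<in>carrier M. f (x \<oplus>\<^bsub>M\<^esub> y) = f x \<oplus>\<^bsub>N\<^esub> f y)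
     \<and> (\<forall>a\<in>carrier R. \<forall>x\<in>carrier M. f (a \<odot>\<^bsub>M\<^esub> x) = a \<odot>\<^bsub>N\<^esub> f x)"

definition selfmod :: "'k ring \<Rightarrow> ('k, 'k) module" where
  "selfmod R = \<lparr>carrier = carrier R, mult = mult R, one = one R, zero = zero R,
                add = add R, smult = (\<lambda>a x. a \<otimes>\<^bsub>R\<^esub> x)\<rparr>"

definition dsum :: "'k ring \<Rightarrow> 'i set \<Rightarrow> ('i \<Rightarrow> ('k, 'a) module) \<Rightarrow> ('k, 'i \<Rightarrow> 'a) module" where
  "dsum R I M = \<lparr>carrier = {F. (\<forall>i\<in>I. F i \<in> carrier (M i)) \<and> (\<forall>i. i \<notin> I \<longrightarrow> F i = undefined)
                          \<and> finite {i\<in>I. F i \<noteq> \<zero>\<^bsub>M i\<^esub>}},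
     mult = (\<lambda>_ _. undefined), one = undefined,
     zero = (\<lambda>i. if i \<in> I then \<zero>\<^bsub>M i\<^esub> else undefined),
     add = (\<lambda>F H i. if i \<in> I then F i \<oplus>\<^bsub>M i\<^esub> H i else undefined),
     smult = (\<lambda>a F i. if i \<in> I then a \<odot>\<^bsub>M i\<^esub> F i else undefined)\<rparr>"

definition dsingle :: "'i set \<Rightarrow> ('i \<Rightarrow> ('k, 'a) module) \<Rightarrow> 'i \<Rightarrow> 'a \<Rightarrow> 'i \<Rightarrow> 'a" where
  "dsingle I M j w = (\<lambda>i. if i \<in> I then (if i = j then w else \<zero>\<^bsub>M i\<^esub>) else undefined)"

definition kspan :: "'k ring \<Rightarrow> ('k, 'a) module \<Rightarrow> 'a set \<Rightarrow> 'a set" where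
  "kspan R M S = \<Inter>{N. submodule N R M \<and> S \<subseteq> N}"

definition qcls :: "('k, 'a) module \<Rightarrow> 'a set \<Rightarrow> 'a \<Rightarrow> 'a set" where
  "qcls M N x = {y \<in> carrier M. y \<ominus>\<^bsub>M\<^esub> x \<in> N}"

definition qrep :: "'a set \<Rightarrow> 'a" where
  "qrep A = (SOME x. x \<in> A)"

definition quotmod :: "('k, 'a) module \<Rightarrow> 'a set \<Rightarrow> ('k, 'a set) module" where
  "quotmod M N = \<lparr>carrier = qcls M N ` carrier M,
     mult = (\<lambda>_ _. undefined), one = undefined,
     zero = qcls M N \<zero>\<^bsub>M\<^esub>,
     add = (\<lambda>A B. qcls M N (qrep A \<oplus>\<^bsub>M\<^esub> qrep B)),
     smult = (\<lambda>a A. qcls M N (a \<odot>\<^bsub>M\<^esub> qrep A))\<rparr>"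

record ('k, 'g, 'a) figmod =
  Obj :: "nat \<Rightarrow> ('k, 'a) module"
  Act :: "nat \<Rightarrow> nat \<Rightarrow> 'g fimor \<Rightarrow> 'a \<Rightarrow> 'a"

definition fig_module :: "'k ring \<Rightarrow> 'g monoid \<Rightarrow> ('k, 'g, 'a) figmod \<Rightarrow> bool" where
  "fig_module R G V \<longleftrightarrow>
     (\<forall>p. module R (Obj V p))
   \<and> (\<forall>p q. \<forall>\<phi>\<in>fimor G p q. linmap R (Obj V p) (Obj V q) (Act V p q \<phi>))
   \<and> (\<forall>p. \<forall>x\<in>carrier (Obj V p). Act V p p (fiid G p) x = x)
   \<and> (\<forall>n m p. \<forall>\<psi>\<in>fimor G n m. \<forall>\<phi>\<in>fimor G m p. \<forall>x\<in>carrier (Obj V n).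
        Act V n p (ficomp G n \<phi> \<psi>) x = Act V m p \<phi> (Act V n m \<psi> x))"

definition fig_morph :: "'k ring \<Rightarrow> 'g monoid \<Rightarrow> ('k, 'g, 'a) figmod \<Rightarrow> ('k, 'g, 'b) figmod
                          \<Rightarrow> (nat \<Rightarrow> 'a \<Rightarrow> 'b) \<Rightarrow> bool" where
  "fig_morph R G V V' \<eta> \<longleftrightarrow>
     (\<forall>p. linmap R (Obj V p) (Obj V' p) (\<eta> p))
   \<and> (\<forall>p q. \<forall>\<phi>\<in>fimor G p q. \<forall>x\<in>carrier (Obj V p).
        \<eta> q (Act V p q \<phi> x) = Act V' p q \<phi> (\<eta> p x))"

definition fig_iso :: "'k ring \<Rightarrow> 'g monoid \<Rightarrow> ('k, 'g, 'a) figmod \<Rightarrow> ('k, 'g, 'b) figmod \<Rightarrow> bool" where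
  "fig_iso R G V V' \<longleftrightarrow> (\<exists>\<eta>. fig_morph R G V V' \<eta>
       \<and> (\<forall>p. bij_betw (\<eta> p) (carrier (Obj V p)) (carrier (Obj V' p))))"

definition dsumfig :: "'k ring \<Rightarrow> 'i set \<Rightarrow> ('i \<Rightarrow> ('k, 'g, 'a) figmod) \<Rightarrow> ('k, 'g, 'i \<Rightarrow> 'a) figmod" where
  "dsumfig R I M = \<lparr>Obj = (\<lambda>p. dsum R I (\<lambda>i. Obj (M i) p)),
     Act = (\<lambda>p q \<phi> F i. if i \<in> I then Act (M i) p q \<phi> (F i) else undefined)\<rparr>"

text \<open>A k[G_n]-module, G_n = Aut([n]) = fimor G n n, is a k-module W together with a
  k-linear left action rho of the group G_n.\<close>
definition grp_mod :: "'k ring \<Rightarrow> 'g monoid \<Rightarrow> nat \<Rightarrow> ('k, 'w) module \<Rightarrow> ('g fimor \<Rightarrow> 'w \<Rightarrow> 'w) \<Rightarrow> bool" where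
  "grp_mod R G n W \<rho> \<longleftrightarrow> module R W
     \<and> (\<forall>\<sigma>\<in>fimor G n n. linmap R W W (\<rho> \<sigma>))
     \<and> (\<forall>w\<in>carrier W. \<rho> (fiid G n) w = w)
     \<and> (\<forall>\<sigma>\<in>fimor G n n. \<forall>\<tau>\<in>fimor G n n. \<forall>w\<in>carrier W.
          \<rho> (ficomp G n \<sigma> \<tau>) w = \<rho> \<sigma> (\<rho> \<tau> w))"

text \<open>W (x)_k k[Hom([n],[p])], realised as the direct sum of copies of W indexed by Hom([n],[p]).\<close>
definition Mpre :: "'k ring \<Rightarrow> 'g monoid \<Rightarrow> nat \<Rightarrow> ('k, 'w) module \<Rightarrow> nat \<Rightarrow> ('k, 'g fimor \<Rightarrow> 'w) module" where
  "Mpre R G n W p = dsum R (fimor G n p) (\<lambda>_. W)"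

text \<open>Relations making the tensor product balanced over k[G_n]:
  (phi o sigma) (x) w  ~  phi (x) (sigma w).\<close>
definition Mrel :: "'k ring \<Rightarrow> 'g monoid \<Rightarrow> nat \<Rightarrow> ('k, 'w) module \<Rightarrow> ('g fimor \<Rightarrow> 'w \<Rightarrow> 'w)
                     \<Rightarrow> nat \<Rightarrow> ('g fimor \<Rightarrow> 'w) set" where
  "Mrel R G n W \<rho> p = kspan R (Mpre R G n W p)
     {dsingle (fimor G n p) (\<lambda>_. W) (ficomp G n \<phi> \<sigma>) w
        \<ominus>\<^bsub>Mpre R G n W p\<^esub> dsingle (fimor G n p) (\<lambda>_. W) \<phi> (\<rho> \<sigma> w)
      | \<phi> \<sigma> w. \<phi> \<in> fimor G n p \<and> \<sigma> \<in> fimor G n n \<and> w \<in> carrier W}"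

definition Mpush :: "'g monoid \<Rightarrow> nat \<Rightarrow> ('k, 'w) module \<Rightarrow> nat \<Rightarrow> nat \<Rightarrow> 'g fimor
                     \<Rightarrow> ('g fimor \<Rightarrow> 'w) \<Rightarrow> 'g fimor \<Rightarrow> 'w" where
  "Mpush G n W p q \<psi> F = (\<lambda>\<chi>. if \<chi> \<in> fimor G n q
      then finsum W F {\<phi> \<in> fimor G n p. ficomp G n \<psi> \<phi> = \<chi>} else undefined)"

text \<open>M(W)_p = W (x)_{k[G_n]} k[Hom_{FI_G}([n],[p])], morphisms acting by postcomposition.\<close>
definition MW :: "'k ring \<Rightarrow> 'g monoid \<Rightarrow> nat \<Rightarrow> ('k, 'w) module \<Rightarrow> ('g fimor \<Rightarrow> 'w \<Rightarrow> 'w)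
                  \<Rightarrow> ('k, 'g, ('g fimor \<Rightarrow> 'w) set) figmod" where
  "MW R G n W \<rho> = \<lparr>Obj = (\<lambda>p. quotmod (Mpre R G n W p) (Mrel R G n W \<rho> p)),
     Act = (\<lambda>p q \<psi> A. qcls (Mpre R G n W q) (Mrel R G n W \<rho> q)
                          (Mpush G n W p q \<psi> (qrep A)))\<rparr>"

text \<open>The group algebra k[G_n] as a left module over itself (left regular action).\<close>
definition kG :: "'k ring \<Rightarrow> 'g monoid \<Rightarrow> nat \<Rightarrow> ('k, 'g fimor \<Rightarrow> 'k) module" where
  "kG R G n = dsum R (fimor G n n) (\<lambda>_. selfmod R)"

definition kG_act :: "'k ring \<Rightarrow> 'g monoid \<Rightarrow> nat \<Rightarrow> 'g fimor \<Rightarrow> ('g fimor \<Rightarrow> 'k) \<Rightarrow> 'g fimor \<Rightarrow> 'k" where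
  "kG_act R G n \<sigma> F = Mpush G n (selfmod R) n n \<sigma> F"

definition Mn :: "'k ring \<Rightarrow> 'g monoid \<Rightarrow> nat
                  \<Rightarrow> ('k, 'g, ('g fimor \<Rightarrow> 'g fimor \<Rightarrow> 'k) set) figmod" where
  "Mn R G n = MW R G n (kG R G n) (kG_act R G n)"

text \<open>V is relatively projective if V is isomorphic to a direct sum over n of M(W_n),
  W_n a k[G_n]-module.  The element type of the W_n is supplied as a parameter.\<close>
definition rel_proj :: "'k ring \<Rightarrow> 'g monoid \<Rightarrow> 'w itself \<Rightarrow> ('k, 'g, 'a) figmod \<Rightarrow> bool" where
  "rel_proj R G T V \<longleftrightarrow> (\<exists>(Wf :: nat \<Rightarrow> ('k, 'w) module) \<rho>f.
      (\<forall>n. grp_mod R G n (Wf n) (\<rho>f n))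
    \<and> fig_iso R G (dsumfig R (UNIV :: nat set) (\<lambda>n. MW R G n (Wf n) (\<rho>f n))) V)"

text \<open>V is generated in degree \<le> m if there is a surjection from a direct sum
  of M(n_i), n_i \<le> m, onto V.  The index type of the family is a parameter.\<close>
definition gen_deg :: "'k ring \<Rightarrow> 'g monoid \<Rightarrow> 'i itself \<Rightarrow> ('k, 'g, 'a) figmod \<Rightarrow> nat \<Rightarrow> bool" where
  "gen_deg R G T V m \<longleftrightarrow> (\<exists>(I :: 'i set) nf \<eta>. (\<forall>i\<in>I. nf i \<le> m)
      \<and> fig_morph R G (dsumfig R I (\<lambda>i. Mn R G (nf i))) V \<eta>
      \<and> (\<forall>p. \<eta> p ` carrier (Obj (dsumfig R I (\<lambda>i. Mn R G (nf i))) p) = carrier (Obj V p)))"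

definition short_exact :: "'k ring \<Rightarrow> 'g monoid \<Rightarrow> ('k, 'g, 'a) figmod \<Rightarrow> ('k, 'g, 'b) figmod
     \<Rightarrow> ('k, 'g, 'c) figmod \<Rightarrow> (nat \<Rightarrow> 'a \<Rightarrow> 'b) \<Rightarrow> (nat \<Rightarrow> 'b \<Rightarrow> 'c) \<Rightarrow> bool" where
  "short_exact R G U M V \<iota> \<pi> \<longleftrightarrow> fig_morph R G U M \<iota> \<and> fig_morph R G M V \<pi>
     \<and> (\<forall>p. inj_on (\<iota> p) (carrier (Obj U p)))
     \<and> (\<forall>p. \<iota> p ` carrier (Obj U p) = {x \<in> carrier (Obj M p). \<pi> p x = \<zero>\<^bsub>Obj V p\<^esub>})
     \<and> (\<forall>p. \<pi> p ` carrier (Obj M p) = carrier (Obj V p))"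

end

theory Submission
  imports Defs
begin

text \<open>
  For an FI_G-module X the maps X(\<phi>), \<phi> : [m] \<rightarrow> [p], assemble into a counit M(X_m) \<rightarrow> X. If it is
  an isomorphism, X is relatively projective: it is M(X_m), completed by zero modules in the other
  degrees. M(W)_p is a direct sum of copies of W indexed by Hom([m],[p]), modulo the relations
  (\<phi>\<sigma>, w) \<sim> (\<phi>, \<sigma>w) for \<sigma> \<in> G_m, so moving every coefficient to a fixed representative of
  its G_m-orbit yields normal forms: M(W)_p is a direct sum of copies of W, one for each orbit.

  U vanishes below degree m (as M(W) does) and is generated in degree \<le> m, so its counit is onto; it
  is injective because U_m embeds into M(W)_m = W and normal forms can be compared inside M(W). The
  counit of V is onto because M(W) \<rightarrow> V is. For injectivity, lift the normal form of an element of
  its kernel coefficientwise to W; the resulting element of M(W) comes from U, hence has the same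
  normal form as the image of coefficients from U_m, and these die in V_m.
\<close>

section \<open>Linear maps and submodules\<close>

lemma linmapD:
  assumes "linmap R M N f"
  shows "\<And>x. x \<in> carrier M \<Longrightarrow> f x \<in> carrier N"
    and "\<And>x y. x \<in> carrier M \<Longrightarrow> y \<in> carrier M \<Longrightarrow> f (x \<oplus>\<^bsub>M\<^esub> y) = f x \<oplus>\<^bsub>N\<^esub> f y"
    and "\<And>a x. a \<in> carrier R \<Longrightarrow> x \<in> carrier M \<Longrightarrow> f (a \<odot>\<^bsub>M\<^esub> x) = a \<odot>\<^bsub>N\<^esub> f x"
  using assms by (auto simp: linmap_def)

lemma linmapI:
  assumes "\<And>x. x \<in> carrier M \<Longrightarrow> f x \<in> carrier N"
    and "\<And>x y. x \<in> carrier M \<Longrightarrow> y \<in> carrier M \<Longrightarrow> f (x \<oplus>\<^bsub>M\<^esub> y) = f x \<oplus>\<^bsub>N\<^esub> f y"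
    and "\<And>a x. a \<in> carrier R \<Longrightarrow> x \<in> carrier M \<Longrightarrow> f (a \<odot>\<^bsub>M\<^esub> x) = a \<odot>\<^bsub>N\<^esub> f x"
  shows "linmap R M N f"
  using assms by (auto simp: linmap_def)

lemma linmap_comp:
  assumes "linmap R M N f" "linmap R N P g"
  shows "linmap R M P (g \<circ> f)"
  using assms by (auto simp: linmap_def Pi_def)

lemma linmap_zero:
  assumes M: "module R M" and N: "module R N" and f: "linmap R M N f"
  shows "f \<zero>\<^bsub>M\<^esub> = \<zero>\<^bsub>N\<^esub>"
proof -
  interpret M: module R M by fact
  interpret N: module R N by fact
  have "f \<zero>\<^bsub>M\<^esub> = f (\<zero>\<^bsub>R\<^esub> \<odot>\<^bsub>M\<^esub> \<zero>\<^bsub>M\<^esub>)" by simp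
  also have "\<dots> = \<zero>\<^bsub>R\<^esub> \<odot>\<^bsub>N\<^esub> f \<zero>\<^bsub>M\<^esub>" by (rule linmapD(3)[OF f]) auto
  also have "\<dots> = \<zero>\<^bsub>N\<^esub>" using linmapD(1)[OF f] by simp
  finally show ?thesis .
qed

lemma linmap_neg:
  assumes M: "module R M" and N: "module R N" and f: "linmap R M N f" and x: "x \<in> carrier M"
  shows "f (\<ominus>\<^bsub>M\<^esub> x) = \<ominus>\<^bsub>N\<^esub> f x"
proof -
  interpret M: module R M by fact
  interpret N: module R N by fact
  have "f (\<ominus>\<^bsub>M\<^esub> x) = f ((\<ominus>\<^bsub>R\<^esub> \<one>\<^bsub>R\<^esub>) \<odot>\<^bsub>M\<^esub> x)" using x M.smult_l_minus by simp
  also have "\<dots> = (\<ominus>\<^bsub>R\<^esub> \<one>\<^bsub>R\<^esub>) \<odot>\<^bsub>N\<^esub> f x" using linmapD(3)[OF f] x by simp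
  also have "\<dots> = \<ominus>\<^bsub>N\<^esub> f x" using linmapD(1)[OF f] x N.smult_l_minus by simp
  finally show ?thesis .
qed

lemma linmap_minus:
  assumes M: "module R M" and N: "module R N" and f: "linmap R M N f"
    and x: "x \<in> carrier M" and y: "y \<in> carrier M"
  shows "f (x \<ominus>\<^bsub>M\<^esub> y) = f x \<ominus>\<^bsub>N\<^esub> f y"
proof -
  interpret M: module R M by fact
  interpret N: module R N by fact
  show ?thesis using x y linmapD[OF f] linmap_neg[OF M N f]
    by (simp add: M.minus_eq N.minus_eq)
qed

lemma linmap_finsum:
  assumes M: "module R M" and N: "module R N" and f: "linmap R M N f"
    and A: "finite A" and g: "g \<in> A \<rightarrow> carrier M"
  shows "f (finsum M g A) = finsum N (\<lambda>a. f (g a)) A"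
  using A g
proof (induction A rule: finite_induct)
  case empty
  interpret M: module R M by fact
  interpret N: module R N by fact
  show ?case using linmap_zero[OF M N f] by simp
next
  case (insert a A)
  interpret M: module R M by fact
  interpret N: module R N by fact
  have ga: "g a \<in> carrier M" and gA: "g \<in> A \<rightarrow> carrier M" using insert by auto
  have "f (finsum M g (insert a A)) = f (g a) \<oplus>\<^bsub>N\<^esub> f (finsum M g A)"
    using insert ga gA linmapD(2)[OF f] by (simp add: M.finsum_insert)
  also have "\<dots> = finsum N (\<lambda>a. f (g a)) (insert a A)"
    using insert gA linmapD(1)[OF f] by (subst N.finsum_insert) auto
  finally show ?case .
qed

lemma linmap_diff:
  assumes M: "module R M" and N: "module R N" and f: "linmap R M N f" and g: "linmap R M N g"
  shows "linmap R M N (\<lambda>x. f x \<ominus>\<^bsub>N\<^esub> g x)"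
proof -
  interpret M: module R M by fact
  interpret N: module R N by fact
  show ?thesis
  proof (rule linmapI)
    fix x y assume "x \<in> carrier M" "y \<in> carrier M"
    then show "f (x \<oplus>\<^bsub>M\<^esub> y) \<ominus>\<^bsub>N\<^esub> g (x \<oplus>\<^bsub>M\<^esub> y) = (f x \<ominus>\<^bsub>N\<^esub> g x) \<oplus>\<^bsub>N\<^esub> (f y \<ominus>\<^bsub>N\<^esub> g y)"
      using linmapD[OF f] linmapD[OF g] by (simp add: N.minus_eq N.minus_add N.a_ac)
  next
    fix a x assume "a \<in> carrier R" "x \<in> carrier M"
    then show "f (a \<odot>\<^bsub>M\<^esub> x) \<ominus>\<^bsub>N\<^esub> g (a \<odot>\<^bsub>M\<^esub> x) = a \<odot>\<^bsub>N\<^esub> (f x \<ominus>\<^bsub>N\<^esub> g x)"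
      using linmapD[OF f] linmapD[OF g] by (simp add: N.minus_eq N.smult_r_distr N.smult_r_minus)
  qed (use linmapD(1)[OF f] linmapD(1)[OF g] in auto)
qed

lemma (in abelian_group) minus_zero_imp_eq:
  "x \<in> carrier G \<Longrightarrow> y \<in> carrier G \<Longrightarrow> x \<ominus> y = \<zero> \<Longrightarrow> x = y"
proof -
  assume x: "x \<in> carrier G" and y: "y \<in> carrier G" and e: "x \<ominus> y = \<zero>"
  have "x = (x \<ominus> y) \<oplus> y" using x y by (simp add: minus_eq a_assoc l_neg)
  then show ?thesis using e y by simp
qed

lemma (in abelian_group) a_inv_eq_zero_iff: "x \<in> carrier G \<Longrightarrow> (\<ominus> x = \<zero>) = (x = \<zero>)"
  using add.inv_eq_1_iff by simp

lemma (in abelian_group) a_inv_zero: "\<ominus> \<zero> = \<zero>"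
  using a_inv_eq_zero_iff[of \<zero>] by simp

lemma submodule_zero_closed:
  assumes M: "module R M" and X: "submodule X R M"
  shows "\<zero>\<^bsub>M\<^esub> \<in> X"
proof -
  interpret M: module R M by fact
  obtain a where a: "a \<in> X" using M.submoduleE(2)[OF X] by blast
  then have "\<zero>\<^bsub>R\<^esub> \<odot>\<^bsub>M\<^esub> a \<in> X" using M.submoduleE(4)[OF X] by blast
  moreover have "\<zero>\<^bsub>R\<^esub> \<odot>\<^bsub>M\<^esub> a = \<zero>\<^bsub>M\<^esub>" using a M.submoduleE(1)[OF X] by auto
  ultimately show ?thesis by simp
qed

lemma zero_submodule:
  assumes "module R M" shows "submodule {\<zero>\<^bsub>M\<^esub>} R M"
proof -
  interpret M: module R M by fact
  show ?thesis by (rule M.submoduleI) (auto simp: M.a_inv_eq_zero_iff)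
qed

lemma submodule_finsum:
  assumes N: "module R N" and X: "submodule X R N" and A: "finite A" and g: "g \<in> A \<rightarrow> X"
  shows "finsum N g A \<in> X"
  using A g
proof (induction A rule: finite_induct)
  case empty
  interpret N: module R N by fact
  show ?case using submodule_zero_closed[OF N X] by simp
next
  case (insert a A)
  interpret N: module R N by fact
  have "g \<in> insert a A \<rightarrow> carrier N" using insert N.submoduleE(1)[OF X] by blast
  then show ?case using insert N.submoduleE(5)[OF X] by (simp add: N.finsum_insert)
qed

lemma linmap_preimage_submodule:
  assumes M: "module R M" and N: "module R N" and f: "linmap R M N f"
    and X: "submodule X R N"
  shows "submodule {x \<in> carrier M. f x \<in> X} R M"
proof -
  interpret M: module R M by fact
  interpret N: module R N by fact
  note XE = N.submoduleE[OF X]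
  show ?thesis
  proof (rule M.submoduleI)
    show "\<zero>\<^bsub>M\<^esub> \<in> {x \<in> carrier M. f x \<in> X}"
      using linmap_zero[OF M N f] submodule_zero_closed[OF N X] by simp
  qed (use linmap_neg[OF M N f] linmapD(2,3)[OF f] XE(3-5) in auto)
qed

lemma linmap_image_submodule:
  assumes M: "module R M" and N: "module R N" and f: "linmap R M N f"
  shows "submodule (f ` carrier M) R N"
proof -
  interpret M: module R M by fact
  interpret N: module R N by fact
  show ?thesis
  proof (rule N.submoduleI)
    show "\<zero>\<^bsub>N\<^esub> \<in> f ` carrier M" using linmap_zero[OF M N f] M.zero_closed by (metis image_eqI)
  next
    fix a assume "a \<in> f ` carrier M"
    then obtain x where x: "x \<in> carrier M" "a = f x" by blast
    show "\<ominus>\<^bsub>N\<^esub> a \<in> f ` carrier M"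
      using linmap_neg[OF M N f x(1)] x M.a_inv_closed[OF x(1)] by (metis image_eqI)
  next
    fix a b assume "a \<in> f ` carrier M" "b \<in> f ` carrier M"
    then obtain x y where x: "x \<in> carrier M" "a = f x" and y: "y \<in> carrier M" "b = f y" by blast
    show "a \<oplus>\<^bsub>N\<^esub> b \<in> f ` carrier M"
      using linmapD(2)[OF f x(1) y(1)] x y M.add.m_closed[OF x(1) y(1)] by (metis image_eqI)
  next
    fix a x assume a: "a \<in> carrier R" and "x \<in> f ` carrier M"
    then obtain y where y: "y \<in> carrier M" "x = f y" by blast
    show "a \<odot>\<^bsub>N\<^esub> x \<in> f ` carrier M"
      using linmapD(3)[OF f a y(1)] y M.smult_closed[OF a y(1)] by (metis image_eqI)
  qed (use linmapD(1)[OF f] in auto)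
qed

lemma kspan_submodule:
  assumes M: "module R M" and S: "S \<subseteq> carrier M"
  shows "submodule (kspan R M S) R M"
proof -
  interpret M: module R M by fact
  let ?F = "{N. submodule N R M \<and> S \<subseteq> N}"
  have "carrier M \<in> ?F" using M.carrier_is_submodule S by blast
  moreover have "\<zero>\<^bsub>M\<^esub> \<in> \<Inter> ?F" using submodule_zero_closed[OF M] by blast
  ultimately show ?thesis unfolding kspan_def
    by (intro M.submoduleI) (auto dest: M.submoduleE(1,3,4) intro: M.submoduleE(5))
qed

lemma kspan_incl: "S \<subseteq> kspan R M S"
  by (auto simp: kspan_def)

lemma kspan_least: "submodule X R M \<Longrightarrow> S \<subseteq> X \<Longrightarrow> kspan R M S \<subseteq> X"
  by (auto simp: kspan_def)

section \<open>Direct sums\<close>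

definition dsum_supp :: "'i set \<Rightarrow> ('i \<Rightarrow> ('k, 'a) module) \<Rightarrow> ('i \<Rightarrow> 'a) \<Rightarrow> 'i set" where
  "dsum_supp I M F = {i\<in>I. F i \<noteq> \<zero>\<^bsub>M i\<^esub>}"

lemma dsum_carrier:
  "F \<in> carrier (dsum R I M) \<longleftrightarrow> (\<forall>i\<in>I. F i \<in> carrier (M i)) \<and> (\<forall>i. i \<notin> I \<longrightarrow> F i = undefined)
     \<and> finite (dsum_supp I M F)"
  by (simp add: dsum_def dsum_supp_def)

lemma dsum_zero: "\<zero>\<^bsub>dsum R I M\<^esub> = (\<lambda>i. if i \<in> I then \<zero>\<^bsub>M i\<^esub> else undefined)"
  by (simp add: dsum_def)

lemma dsum_add: "x \<oplus>\<^bsub>dsum R I M\<^esub> y = (\<lambda>i. if i \<in> I then x i \<oplus>\<^bsub>M i\<^esub> y i else undefined)"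
  by (simp add: dsum_def)

lemma dsum_smult: "a \<odot>\<^bsub>dsum R I M\<^esub> y = (\<lambda>i. if i \<in> I then a \<odot>\<^bsub>M i\<^esub> y i else undefined)"
  by (simp add: dsum_def)

locale dsum_family =
  fixes R :: "'k ring" and I :: "'i set" and M :: "'i \<Rightarrow> ('k, 'a) module"
  assumes R: "cring R" and M_module: "\<And>i. i \<in> I \<Longrightarrow> module R (M i)"
begin

abbreviation D where "D \<equiv> dsum R I M"
abbreviation single where "single \<equiv> dsingle I M"

lemma M_abelian_group: "i \<in> I \<Longrightarrow> abelian_group (M i)"
  by (rule module.axioms(2)[OF M_module])

lemma dsum_abelian_group: "abelian_group D"
proof -
  note agE = abelian_groupE[OF M_abelian_group]
  have add_closed: "x \<oplus>\<^bsub>D\<^esub> y \<in> carrier D" if x: "x \<in> carrier D" and y: "y \<in> carrier D" for x y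
  proof -
    have "dsum_supp I M (x \<oplus>\<^bsub>D\<^esub> y) \<subseteq> dsum_supp I M x \<union> dsum_supp I M y"
      using x y by (auto simp: dsum_carrier dsum_add dsum_supp_def agE)
    then show ?thesis using x y by (auto simp: dsum_carrier dsum_add intro: agE finite_subset)
  qed
  have zero_closed: "\<zero>\<^bsub>D\<^esub> \<in> carrier D"
    by (auto simp: dsum_carrier dsum_zero dsum_supp_def agE(2))
  show ?thesis
  proof (rule abelian_groupI)
    fix x assume x: "x \<in> carrier D"
    define y where "y = (\<lambda>i. if i \<in> I then \<ominus>\<^bsub>M i\<^esub> x i else undefined)"
    have "dsum_supp I M y = dsum_supp I M x"
      using x M_abelian_group
      by (auto simp: y_def dsum_carrier dsum_supp_def abelian_group.a_inv_eq_zero_iff)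
    then have "y \<in> carrier D"
      using x M_abelian_group by (auto simp: y_def dsum_carrier abelian_group.a_inv_closed)
    moreover have "y \<oplus>\<^bsub>D\<^esub> x = \<zero>\<^bsub>D\<^esub>"
      using x M_abelian_group
        by (auto simp: y_def dsum_carrier dsum_add dsum_zero abelian_group.l_neg)
    ultimately show "\<exists>y\<in>carrier D. y \<oplus>\<^bsub>D\<^esub> x = \<zero>\<^bsub>D\<^esub>" by blast
  next
    fix x y z assume "x \<in> carrier D" "y \<in> carrier D" "z \<in> carrier D"
    then show "x \<oplus>\<^bsub>D\<^esub> y \<oplus>\<^bsub>D\<^esub> z = x \<oplus>\<^bsub>D\<^esub> (y \<oplus>\<^bsub>D\<^esub> z)"
      by (simp add: dsum_add dsum_carrier agE(3) fun_eq_iff)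
  next
    fix x y assume "x \<in> carrier D" "y \<in> carrier D"
    then show "x \<oplus>\<^bsub>D\<^esub> y = y \<oplus>\<^bsub>D\<^esub> x"
      by (simp add: dsum_add dsum_carrier agE(4) fun_eq_iff)
  next
    fix x assume "x \<in> carrier D"
    then show "\<zero>\<^bsub>D\<^esub> \<oplus>\<^bsub>D\<^esub> x = x"
      by (auto simp: dsum_add dsum_zero dsum_carrier agE(5) fun_eq_iff)
  qed (auto intro: add_closed zero_closed)
qed

lemma dsum_is_module: "module R D"
proof (rule moduleI[OF R dsum_abelian_group])
  fix a x assume a: "a \<in> carrier R" and x: "x \<in> carrier D"
  have "dsum_supp I M (a \<odot>\<^bsub>D\<^esub> x) \<subseteq> dsum_supp I M x"
    using x a M_module module.smult_r_null
      by (fastforce simp: dsum_carrier dsum_smult dsum_supp_def)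
  then show "a \<odot>\<^bsub>D\<^esub> x \<in> carrier D"
    using x a M_module
      by (auto simp: dsum_carrier dsum_smult intro: finite_subset module.smult_closed)
qed (auto simp: dsum_add dsum_smult dsum_carrier fun_eq_iff M_module module.smult_l_distr
    module.smult_assoc1 module.smult_one intro!: module.smult_r_distr[OF M_module])

lemma dsingle_apply: "i \<in> I \<Longrightarrow> single j w i = (if i = j then w else \<zero>\<^bsub>M i\<^esub>)"
  by (simp add: dsingle_def)

lemma dsingle_carrier: "j \<in> I \<Longrightarrow> w \<in> carrier (M j) \<Longrightarrow> single j w \<in> carrier D"
  using abelian_groupE(2)[OF M_abelian_group] finite_subset[of "dsum_supp I M (single j w)" "{j}"]
  by (auto simp: dsum_carrier dsingle_def dsum_supp_def)

lemma dsingle_linmap: "j \<in> I \<Longrightarrow> linmap R (M j) D (single j)"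
proof (rule linmapI)
  fix x y assume "j \<in> I" "x \<in> carrier (M j)" "y \<in> carrier (M j)"
  then show "single j (x \<oplus>\<^bsub>M j\<^esub> y) = single j x \<oplus>\<^bsub>D\<^esub> single j y"
    using abelian_groupE(2,5)[OF M_abelian_group] by (auto simp: dsingle_def dsum_add fun_eq_iff)
next
  fix a x assume "j \<in> I" "a \<in> carrier R" "x \<in> carrier (M j)"
  then show "single j (a \<odot>\<^bsub>M j\<^esub> x) = a \<odot>\<^bsub>D\<^esub> single j x"
    by (auto simp: dsingle_def dsum_smult fun_eq_iff module.smult_r_null[OF M_module])
qed (rule dsingle_carrier)

lemma dsum_eqI: "F \<in> carrier D \<Longrightarrow> H \<in> carrier D \<Longrightarrow> (\<And>i. i \<in> I \<Longrightarrow> F i = H i) \<Longrightarrow> F = H"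
  by (rule ext) (metis dsum_carrier)

lemma finsum_dsum_apply:
  assumes A: "finite A" and f: "f \<in> A \<rightarrow> carrier D" and i: "i \<in> I"
  shows "finsum D f A i = finsum (M i) (\<lambda>a. f a i) A"
  using A f
proof (induction A rule: finite_induct)
  case empty
  interpret D: module R D by (rule dsum_is_module)
  interpret Mi: abelian_group "M i" by (rule M_abelian_group[OF i])
  show ?case using i by (simp add: dsum_zero)
next
  case (insert a A)
  interpret D: module R D by (rule dsum_is_module)
  interpret Mi: abelian_group "M i" by (rule M_abelian_group[OF i])
  have "finsum D f (insert a A) i = f a i \<oplus>\<^bsub>M i\<^esub> finsum (M i) (\<lambda>a. f a i) A"
    using insert i by (simp add: D.finsum_insert dsum_add)
  also have "\<dots> = finsum (M i) (\<lambda>a. f a i) (insert a A)"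
    using insert i by (subst Mi.finsum_insert) (auto simp: dsum_carrier Pi_def)
  finally show ?case .
qed

lemma dsum_decomp:
  assumes F: "F \<in> carrier D"
  shows "finsum D (\<lambda>i. single i (F i)) (dsum_supp I M F) = F"
proof (rule dsum_eqI)
  let ?S = "dsum_supp I M F"
  have fin: "finite ?S" using F by (simp add: dsum_carrier)
  have cl: "(\<lambda>i. single i (F i)) \<in> ?S \<rightarrow> carrier D"
    using F by (auto simp: dsum_supp_def dsum_carrier intro!: dsingle_carrier)
  show "finsum D (\<lambda>i. single i (F i)) ?S \<in> carrier D"
    using abelian_monoid.finsum_closed[OF abelian_group.axioms(1)[OF dsum_abelian_group] cl] .
  show "F \<in> carrier D" by fact
  fix i assume i: "i \<in> I"
  interpret Mi: abelian_group "M i" by (rule M_abelian_group[OF i])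
  have "finsum D (\<lambda>i. single i (F i)) ?S i = finsum (M i) (\<lambda>j. if i = j then F i else \<zero>\<^bsub>M i\<^esub>) ?S"
    unfolding finsum_dsum_apply[OF fin cl i]
    by (rule Mi.finsum_cong') (use F i in \<open>auto simp: dsingle_apply dsum_carrier dsum_supp_def\<close>)
  also have "\<dots> = F i"
  proof (cases "i \<in> ?S")
    case True
    then show ?thesis using Mi.add.finprod_singleton[OF True fin, of "\<lambda>_. F i"] F i
      by (auto simp: dsum_carrier)
  next
    case False
    then have "F i = \<zero>\<^bsub>M i\<^esub>" using i by (simp add: dsum_supp_def)
    moreover have "finsum (M i) (\<lambda>j. if i = j then F i else \<zero>\<^bsub>M i\<^esub>) ?S = \<zero>\<^bsub>M i\<^esub>"
      using False by (intro Mi.add.finprod_one_eqI) auto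
    ultimately show ?thesis by simp
  qed
  finally show "finsum D (\<lambda>i. single i (F i)) ?S i = F i" .
qed

lemma linmap_dsum_expand:
  assumes N: "module R N" and L: "linmap R D N L" and F: "F \<in> carrier D"
  shows "L F = finsum N (\<lambda>i. L (single i (F i))) (dsum_supp I M F)"
proof -
  have "L F = L (finsum D (\<lambda>i. single i (F i)) (dsum_supp I M F))" using dsum_decomp[OF F] by simp
  also have "\<dots> = finsum N (\<lambda>i. L (single i (F i))) (dsum_supp I M F)"
    using F by (intro linmap_finsum[OF dsum_is_module N L])
      (auto simp: dsum_supp_def dsum_carrier intro!: dsingle_carrier)
  finally show ?thesis .
qed

lemma linmap_dsum_mem:
  assumes N: "module R N" and L: "linmap R D N L" and X: "submodule X R N"
    and gen: "\<And>j w. j \<in> I \<Longrightarrow> w \<in> carrier (M j) \<Longrightarrow> L (single j w) \<in> X"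
    and F: "F \<in> carrier D"
  shows "L F \<in> X"
  unfolding linmap_dsum_expand[OF N L F] using F
  by (intro submodule_finsum[OF N X]) (auto simp: dsum_supp_def dsum_carrier intro!: gen)

lemma linmap_dsum_eqI:
  assumes N: "module R N" and L: "linmap R D N L" and L': "linmap R D N L'"
    and gen: "\<And>j w. j \<in> I \<Longrightarrow> w \<in> carrier (M j) \<Longrightarrow> L (single j w) = L' (single j w)"
    and F: "F \<in> carrier D"
  shows "L F = L' F"
  unfolding linmap_dsum_expand[OF N L F] linmap_dsum_expand[OF N L' F]
  using F by (intro abelian_monoid.finsum_cong' abelian_group.axioms(1) module.axioms(2)[OF N])
    (auto simp: gen dsum_carrier dsum_supp_def Pi_def intro!: linmapD(1)[OF L'] dsingle_carrier)

end

section \<open>Quotient modules\<close>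

locale quotient_module = M: module R M for R :: "'k ring" and M :: "('k, 'c) module" (structure) +
  fixes N assumes N: "submodule N R M"
begin

abbreviation cls where "cls \<equiv> qcls M N"
abbreviation Q where "Q \<equiv> quotmod M N"

lemma cls_self: "x \<in> carrier M \<Longrightarrow> x \<in> cls x"
  using submodule_zero_closed[OF M.module_axioms N] by (simp add: qcls_def M.r_neg M.minus_eq)

lemma cls_eq_iff: "x \<in> carrier M \<Longrightarrow> y \<in> carrier M \<Longrightarrow> (cls x = cls y) \<longleftrightarrow> x \<ominus> y \<in> N"
proof
  assume "x \<in> carrier M" and "cls x = cls y"
  then show "x \<ominus> y \<in> N" using cls_self by (auto simp: qcls_def)
next
  assume x: "x \<in> carrier M" and y: "y \<in> carrier M" and d: "x \<ominus> y \<in> N"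
  have d': "y \<ominus> x \<in> N"
    using M.submoduleE(3)[OF N d] x y by (simp add: M.minus_eq M.minus_add M.a_comm)
  have "z \<ominus> x \<in> N \<longleftrightarrow> z \<ominus> y \<in> N" if z: "z \<in> carrier M" for z
  proof
    assume "z \<ominus> x \<in> N"
    moreover have "z \<ominus> y = (z \<ominus> x) \<oplus> (x \<ominus> y)"
      using x y z by (simp add: M.minus_eq M.a_assoc M.r_neg1)
    ultimately show "z \<ominus> y \<in> N" using M.submoduleE(5)[OF N] d by metis
  next
    assume "z \<ominus> y \<in> N"
    moreover have "z \<ominus> x = (z \<ominus> y) \<oplus> (y \<ominus> x)"
      using x y z by (simp add: M.minus_eq M.a_assoc M.r_neg1)
    ultimately show "z \<ominus> x \<in> N" using M.submoduleE(5)[OF N] d' by metis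
  qed
  then show "cls x = cls y" by (auto simp: qcls_def)
qed

lemma quotmod_carrier: "carrier Q = cls ` carrier M"
  by (simp add: quotmod_def)

lemma quotmod_zero: "\<zero>\<^bsub>Q\<^esub> = cls \<zero>"
  by (simp add: quotmod_def)

lemma cls_closed: "x \<in> carrier M \<Longrightarrow> cls x \<in> carrier Q"
  by (simp add: quotmod_def)

lemma qrep_cls: "x \<in> carrier M \<Longrightarrow> qrep (cls x) \<in> carrier M \<and> qrep (cls x) \<ominus> x \<in> N"
proof -
  assume x: "x \<in> carrier M"
  have "qrep (cls x) \<in> cls x" unfolding qrep_def using cls_self[OF x] by (rule someI)
  then show ?thesis by (auto simp: qcls_def)
qed

lemma qrep_closed: "A \<in> carrier Q \<Longrightarrow> qrep A \<in> carrier M"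
  using qrep_cls by (auto simp: quotmod_carrier)

lemma cls_qrep: "A \<in> carrier Q \<Longrightarrow> cls (qrep A) = A"
  using qrep_cls cls_eq_iff by (auto simp: quotmod_carrier)

lemma cls_add: "x \<in> carrier M \<Longrightarrow> y \<in> carrier M \<Longrightarrow> cls x \<oplus>\<^bsub>Q\<^esub> cls y = cls (x \<oplus> y)"
proof -
  assume x: "x \<in> carrier M" and y: "y \<in> carrier M"
  let ?x = "qrep (cls x)" and ?y = "qrep (cls y)"
  have "(?x \<oplus> ?y) \<ominus> (x \<oplus> y) = (?x \<ominus> x) \<oplus> (?y \<ominus> y)"
    using qrep_cls x y by (simp add: M.minus_eq M.minus_add M.a_ac)
  then have "(?x \<oplus> ?y) \<ominus> (x \<oplus> y) \<in> N" using qrep_cls x y M.submoduleE(5)[OF N] by auto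
  then show ?thesis using cls_eq_iff qrep_cls x y by (simp add: quotmod_def)
qed

lemma cls_smult: "a \<in> carrier R \<Longrightarrow> x \<in> carrier M \<Longrightarrow> a \<odot>\<^bsub>Q\<^esub> cls x = cls (a \<odot> x)"
proof -
  assume a: "a \<in> carrier R" and x: "x \<in> carrier M"
  let ?x = "qrep (cls x)"
  have "a \<odot> ?x \<ominus> a \<odot> x = a \<odot> (?x \<ominus> x)"
    using qrep_cls x a by (simp add: M.minus_eq M.smult_r_distr M.smult_r_minus)
  then have "a \<odot> ?x \<ominus> a \<odot> x \<in> N" using qrep_cls x M.submoduleE(4)[OF N a] by auto
  then show ?thesis using cls_eq_iff qrep_cls x a by (simp add: quotmod_def)
qed

lemma cls_zero_iff: "x \<in> carrier M \<Longrightarrow> (cls x = \<zero>\<^bsub>Q\<^esub>) \<longleftrightarrow> x \<in> N"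
  using cls_eq_iff[of x "\<zero>"] by (simp add: quotmod_zero M.minus_eq M.a_inv_zero)

lemma quotmod_is_module: "module R Q"
proof -
  have ag: "abelian_group Q"
  proof (rule abelian_groupI)
    fix x assume "x \<in> carrier Q"
    then obtain y where y: "y \<in> carrier M" "x = cls y" by (auto simp: quotmod_carrier)
    then have "cls (\<ominus> y) \<in> carrier Q" "cls (\<ominus> y) \<oplus>\<^bsub>Q\<^esub> x = \<zero>\<^bsub>Q\<^esub>"
      by (auto simp: cls_closed cls_add M.l_neg quotmod_zero)
    then show "\<exists>y\<in>carrier Q. y \<oplus>\<^bsub>Q\<^esub> x = \<zero>\<^bsub>Q\<^esub>" by blast
  qed (auto simp: quotmod_carrier quotmod_zero cls_add M.a_ac)
  show ?thesis
    by (rule moduleI[OF M.is_cring ag])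
      (auto simp: quotmod_carrier cls_smult cls_add M.smult_l_distr M.smult_r_distr M.smult_assoc1)
qed

lemma cls_linmap: "linmap R M Q cls"
  by (rule linmapI) (auto simp: cls_closed cls_add cls_smult)

lemma linmap_qrep_cls:
  assumes X: "module R X" and L: "linmap R M X L" and kill: "\<And>x. x \<in> N \<Longrightarrow> L x = \<zero>\<^bsub>X\<^esub>"
    and x: "x \<in> carrier M"
  shows "L (qrep (cls x)) = L x"
proof -
  interpret X: module R X by fact
  have "L (qrep (cls x)) \<ominus>\<^bsub>X\<^esub> L x = L (qrep (cls x) \<ominus> x)"
    using linmap_minus[OF M.module_axioms X L] qrep_cls[OF x] x by simp
  also have "\<dots> = \<zero>\<^bsub>X\<^esub>" using kill qrep_cls[OF x] by simp
  finally have "L (qrep (cls x)) \<ominus>\<^bsub>X\<^esub> L x = \<zero>\<^bsub>X\<^esub>" .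
  then show ?thesis using X.minus_zero_imp_eq linmapD(1)[OF L] qrep_cls[OF x] x by blast
qed

lemma linmap_qrep:
  assumes X: "module R X" and L: "linmap R M X L" and kill: "\<And>x. x \<in> N \<Longrightarrow> L x = \<zero>\<^bsub>X\<^esub>"
  shows "linmap R Q X (\<lambda>A. L (qrep A))"
proof (rule linmapI)
  fix A B assume "A \<in> carrier Q" "B \<in> carrier Q"
  then obtain x y where "x \<in> carrier M" "A = cls x" "y \<in> carrier M" "B = cls y"
    by (auto simp: quotmod_carrier)
  then show "L (qrep (A \<oplus>\<^bsub>Q\<^esub> B)) = L (qrep A) \<oplus>\<^bsub>X\<^esub> L (qrep B)"
    using linmap_qrep_cls[OF X L kill] linmapD(2)[OF L] by (simp add: cls_add)
next
  fix a A assume "a \<in> carrier R" "A \<in> carrier Q"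
  then obtain x where "x \<in> carrier M" "A = cls x" by (auto simp: quotmod_carrier)
  then show "L (qrep (a \<odot>\<^bsub>Q\<^esub> A)) = a \<odot>\<^bsub>X\<^esub> L (qrep A)"
    using \<open>a \<in> carrier R\<close> linmap_qrep_cls[OF X L kill] linmapD(3)[OF L] by (simp add: cls_smult)
qed (use qrep_closed linmapD(1)[OF L] in auto)

end

section \<open>The category FI_G\<close>

lemma fimorD:
  assumes "\<phi> \<in> fimor G n m"
  shows "fst \<phi> \<in> {..<n} \<rightarrow>\<^sub>E {..<m}" "inj_on (fst \<phi>) {..<n}" "snd \<phi> \<in> {..<n} \<rightarrow>\<^sub>E carrier G"
proof -
  obtain f g where p: "\<phi> = (f, g)" by (cases \<phi>)
  have "f \<in> {..<n} \<rightarrow>\<^sub>E {..<m} \<and> inj_on f {..<n} \<and> g \<in> {..<n} \<rightarrow>\<^sub>E carrier G"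
    using assms unfolding p fimor_def by (simp only: mem_Collect_eq case_prod_conv)
  then show "fst \<phi> \<in> {..<n} \<rightarrow>\<^sub>E {..<m}" "inj_on (fst \<phi>) {..<n}" "snd \<phi> \<in> {..<n} \<rightarrow>\<^sub>E carrier G"
    unfolding p by simp_all
qed

lemma fimorI:
  "fst \<phi> \<in> {..<n} \<rightarrow>\<^sub>E {..<m} \<Longrightarrow> inj_on (fst \<phi>) {..<n} \<Longrightarrow> snd \<phi> \<in> {..<n} \<rightarrow>\<^sub>E carrier G
   \<Longrightarrow> \<phi> \<in> fimor G n m"
  by (cases \<phi>) (simp only: fimor_def mem_Collect_eq case_prod_conv fst_conv snd_conv)

lemma fimor_eqI:
  assumes "\<phi> \<in> fimor G n m" "\<psi> \<in> fimor G n m'"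
    and "\<And>x. x < n \<Longrightarrow> fst \<phi> x = fst \<psi> x" "\<And>x. x < n \<Longrightarrow> snd \<phi> x = snd \<psi> x"
  shows "\<phi> = \<psi>"
proof -
  have "fst \<phi> = fst \<psi>"
  proof
    fix x show "fst \<phi> x = fst \<psi> x"
      using fimorD(1)[OF assms(1)] fimorD(1)[OF assms(2)] assms(3)
      by (cases "x < n") (auto simp: PiE_def extensional_def)
  qed
  moreover have "snd \<phi> = snd \<psi>"
  proof
    fix x show "snd \<phi> x = snd \<psi> x"
      using fimorD(3)[OF assms(1)] fimorD(3)[OF assms(2)] assms(4)
      by (cases "x < n") (auto simp: PiE_def extensional_def)
  qed
  ultimately show ?thesis by (simp add: prod_eq_iff)
qed

lemma ficomp_fst: "x < n \<Longrightarrow> fst (ficomp G n \<phi> \<psi>) x = fst \<phi> (fst \<psi> x)"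
  by (simp add: ficomp_def)
lemma ficomp_snd: "x < n \<Longrightarrow> snd (ficomp G n \<phi> \<psi>) x = snd \<psi> x \<otimes>\<^bsub>G\<^esub> snd \<phi> (fst \<psi> x)"
  by (simp add: ficomp_def)
lemma fiid_fst: "x < n \<Longrightarrow> fst (fiid G n) x = x" by (simp add: fiid_def)
lemma fiid_snd: "x < n \<Longrightarrow> snd (fiid G n) x = \<one>\<^bsub>G\<^esub>" by (simp add: fiid_def)

lemma fimor_fst_less: "\<phi> \<in> fimor G n m \<Longrightarrow> x < n \<Longrightarrow> fst \<phi> x < m"
  using fimorD(1) by fastforce
lemma fimor_snd_closed: "\<phi> \<in> fimor G n m \<Longrightarrow> x < n \<Longrightarrow> snd \<phi> x \<in> carrier G"
  using fimorD(3) by fastforce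

lemma fimor_empty: "k < m \<Longrightarrow> fimor G m k = {}"
proof (rule ccontr)
  assume k: "k < m" and "fimor G m k \<noteq> {}"
  then obtain \<phi> where \<phi>: "\<phi> \<in> fimor G m k" by blast
  have "fst \<phi> ` {..<m} \<subseteq> {..<k}" using fimorD(1)[OF \<phi>] by (auto simp: PiE_def Pi_def)
  then have "card {..<m} \<le> card {..<k}" using card_inj_on_le[OF fimorD(2)[OF \<phi>]] by blast
  then show False using k by simp
qed

locale fi_group = group G for G :: "'g monoid" (structure)

context fi_group
begin

lemma ficomp_closed:
  assumes \<psi>: "\<psi> \<in> fimor G n m" and \<phi>: "\<phi> \<in> fimor G m p"
  shows "ficomp G n \<phi> \<psi> \<in> fimor G n p"
proof (rule fimorI)
  show "fst (ficomp G n \<phi> \<psi>) \<in> {..<n} \<rightarrow>\<^sub>E {..<p}"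
    using fimor_fst_less[OF \<psi>] fimor_fst_less[OF \<phi>] by (auto simp: ficomp_def)
  show "inj_on (fst (ficomp G n \<phi> \<psi>)) {..<n}"
  proof (rule inj_onI)
    fix x y assume "x \<in> {..<n}" "y \<in> {..<n}" "fst (ficomp G n \<phi> \<psi>) x = fst (ficomp G n \<phi> \<psi>) y"
    then show "x = y" using fimor_fst_less[OF \<psi>] fimorD(2)[OF \<phi>] fimorD(2)[OF \<psi>]
      by (auto simp: ficomp_def inj_on_def)
  qed
  show "snd (ficomp G n \<phi> \<psi>) \<in> {..<n} \<rightarrow>\<^sub>E carrier G"
    using fimor_fst_less[OF \<psi>] fimor_snd_closed[OF \<psi>] fimor_snd_closed[OF \<phi>]
      by (auto simp: ficomp_def)
qed

lemma fiid_closed: "fiid G n \<in> fimor G n n"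
  by (rule fimorI) (auto simp: fiid_def)

lemma ficomp_assoc:
  assumes \<psi>: "\<psi> \<in> fimor G n m" and \<phi>: "\<phi> \<in> fimor G m p" and \<chi>: "\<chi> \<in> fimor G p q"
  shows "ficomp G n (ficomp G m \<chi> \<phi>) \<psi> = ficomp G n \<chi> (ficomp G n \<phi> \<psi>)"
proof (rule fimor_eqI)
  show "ficomp G n (ficomp G m \<chi> \<phi>) \<psi> \<in> fimor G n q"
    by (intro ficomp_closed[OF \<psi>] ficomp_closed[OF \<phi> \<chi>])
  show "ficomp G n \<chi> (ficomp G n \<phi> \<psi>) \<in> fimor G n q"
    by (intro ficomp_closed[OF _ \<chi>] ficomp_closed[OF \<psi> \<phi>])
  fix x assume x: "x < n"
  have y: "fst \<psi> x < m" using fimor_fst_less[OF \<psi> x] .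
  show "fst (ficomp G n (ficomp G m \<chi> \<phi>) \<psi>) x = fst (ficomp G n \<chi> (ficomp G n \<phi> \<psi>)) x"
    using x y by (simp add: ficomp_fst)
  show "snd (ficomp G n (ficomp G m \<chi> \<phi>) \<psi>) x = snd (ficomp G n \<chi> (ficomp G n \<phi> \<psi>)) x"
    using x y fimor_snd_closed[OF \<psi> x] fimor_snd_closed[OF \<phi> y]
      fimor_snd_closed[OF \<chi> fimor_fst_less[OF \<phi> y]]
    by (simp add: ficomp_fst ficomp_snd m_assoc)
qed

lemma ficomp_fiid_left:
  assumes \<phi>: "\<phi> \<in> fimor G n p"
  shows "ficomp G n (fiid G p) \<phi> = \<phi>"
  by (rule fimor_eqI[OF ficomp_closed[OF \<phi> fiid_closed] \<phi>])
    (simp_all add: ficomp_fst ficomp_snd fiid_fst fiid_snd fimor_fst_less[OF \<phi>]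
        fimor_snd_closed[OF \<phi>])

lemma ficomp_fiid_right:
  assumes \<phi>: "\<phi> \<in> fimor G n p"
  shows "ficomp G n \<phi> (fiid G n) = \<phi>"
  by (rule fimor_eqI[OF ficomp_closed[OF fiid_closed \<phi>] \<phi>])
    (simp_all add: ficomp_fst ficomp_snd fiid_fst fiid_snd fimor_fst_less[OF \<phi>]
        fimor_snd_closed[OF \<phi>])

lemma ficomp_left_cancel:
  assumes \<phi>: "\<phi> \<in> fimor G m p" and \<psi>: "\<psi> \<in> fimor G n m" and \<psi>': "\<psi>' \<in> fimor G n m"
    and e: "ficomp G n \<phi> \<psi> = ficomp G n \<phi> \<psi>'"
  shows "\<psi> = \<psi>'"
proof (rule fimor_eqI[OF \<psi> \<psi>'])
  fix x assume x: "x < n"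
  have "fst \<phi> (fst \<psi> x) = fst \<phi> (fst \<psi>' x)"
    using arg_cong[OF e, of "\<lambda>\<chi>. fst \<chi> x"] x by (simp add: ficomp_fst)
  then show f: "fst \<psi> x = fst \<psi>' x"
    using fimorD(2)[OF \<phi>] fimor_fst_less[OF \<psi> x] fimor_fst_less[OF \<psi>' x] by (auto simp: inj_on_def)
  have "snd \<psi> x \<otimes> snd \<phi> (fst \<psi> x) = snd \<psi>' x \<otimes> snd \<phi> (fst \<psi> x)"
    using arg_cong[OF e, of "\<lambda>\<chi>. snd \<chi> x"] x f by (simp add: ficomp_snd)
  then show "snd \<psi> x = snd \<psi>' x"
    using right_cancel[OF fimor_snd_closed[OF \<phi> fimor_fst_less[OF \<psi> x]] fimor_snd_closed[OF \<psi> x]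
        fimor_snd_closed[OF \<psi>' x]]
    by simp
qed

lemma fimor_right_inverse:
  assumes \<sigma>: "\<sigma> \<in> fimor G n n"
  shows "\<exists>\<tau>\<in>fimor G n n. ficomp G n \<sigma> \<tau> = fiid G n"
proof -
  let ?f = "fst \<sigma>" and ?g = "snd \<sigma>"
  have inj: "inj_on ?f {..<n}" using fimorD(2)[OF \<sigma>] .
  have im: "?f ` {..<n} = {..<n}"
    using endo_inj_surj[of "{..<n}" ?f] inj fimor_fst_less[OF \<sigma>] by auto
  define t where "t = the_inv_into {..<n} ?f"
  have t_in: "x < n \<Longrightarrow> t x < n" for x
    using the_inv_into_into[OF inj, of x "{..<n}"] im by (auto simp: t_def)
  have ft: "x < n \<Longrightarrow> ?f (t x) = x" for x
    using f_the_inv_into_f[OF inj, of x] im by (auto simp: t_def)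
  define \<tau> where "\<tau> = (restrict t {..<n}, restrict (\<lambda>x. inv (?g (t x))) {..<n})"
  have \<tau>: "\<tau> \<in> fimor G n n"
  proof (rule fimorI)
    show "fst \<tau> \<in> {..<n} \<rightarrow>\<^sub>E {..<n}" using t_in by (auto simp: \<tau>_def)
    show "inj_on (fst \<tau>) {..<n}"
    proof (rule inj_onI)
      fix x y assume x: "x \<in> {..<n}" and y: "y \<in> {..<n}" and e: "fst \<tau> x = fst \<tau> y"
      have "t x = t y" using e x y by (simp add: \<tau>_def)
      then have "?f (t x) = ?f (t y)" by simp
      then show "x = y" using ft x y by simp
    qed
    show "snd \<tau> \<in> {..<n} \<rightarrow>\<^sub>E carrier G"
      using t_in fimor_snd_closed[OF \<sigma>] by (auto simp: \<tau>_def)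
  qed
  have "ficomp G n \<sigma> \<tau> = fiid G n"
  proof (rule fimor_eqI[OF ficomp_closed[OF \<tau> \<sigma>] fiid_closed])
    fix x assume x: "x < n"
    show "fst (ficomp G n \<sigma> \<tau>) x = fst (fiid G n) x"
      using x by (simp add: ficomp_fst fiid_fst \<tau>_def ft)
    show "snd (ficomp G n \<sigma> \<tau>) x = snd (fiid G n) x"
      using x t_in[OF x] fimor_snd_closed[OF \<sigma>] by (simp add: ficomp_snd fiid_snd \<tau>_def)
  qed
  then show ?thesis using \<tau> by blast
qed

definition fi_orbit :: "nat \<Rightarrow> 'g fimor \<Rightarrow> 'g fimor set" where
  "fi_orbit n \<phi> = {ficomp G n \<phi> \<sigma> | \<sigma>. \<sigma> \<in> fimor G n n}"

definition orbit_rep :: "nat \<Rightarrow> 'g fimor \<Rightarrow> 'g fimor" where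
  "orbit_rep n \<phi> = (SOME \<chi>. \<chi> \<in> fi_orbit n \<phi>)"

definition orbit_coord :: "nat \<Rightarrow> 'g fimor \<Rightarrow> 'g fimor" where
  "orbit_coord n \<phi> = (THE \<sigma>. \<sigma> \<in> fimor G n n \<and> ficomp G n (orbit_rep n \<phi>) \<sigma> = \<phi>)"

lemma fi_orbit_self: "\<phi> \<in> fimor G n p \<Longrightarrow> \<phi> \<in> fi_orbit n \<phi>"
proof -
  assume a: "\<phi> \<in> fimor G n p"
  have "\<phi> = ficomp G n \<phi> (fiid G n)" using ficomp_fiid_right[OF a] by simp
  then show ?thesis unfolding fi_orbit_def using fiid_closed by blast
qed

lemma fi_orbit_closed: "\<phi> \<in> fimor G n p \<Longrightarrow> \<chi> \<in> fi_orbit n \<phi> \<Longrightarrow> \<chi> \<in> fimor G n p"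
  unfolding fi_orbit_def using ficomp_closed by blast

lemma fi_orbit_eq:
  assumes \<phi>: "\<phi> \<in> fimor G n p" and \<chi>: "\<chi> \<in> fi_orbit n \<phi>"
  shows "fi_orbit n \<chi> = fi_orbit n \<phi>"
proof -
  obtain \<sigma> where \<sigma>: "\<sigma> \<in> fimor G n n" and e: "\<chi> = ficomp G n \<phi> \<sigma>"
    using \<chi> unfolding fi_orbit_def by blast
  obtain \<tau> where \<tau>: "\<tau> \<in> fimor G n n" and st: "ficomp G n \<sigma> \<tau> = fiid G n"
    using fimor_right_inverse[OF \<sigma>] by blast
  show ?thesis
  proof
    show "fi_orbit n \<chi> \<subseteq> fi_orbit n \<phi>"
    proof
      fix x assume "x \<in> fi_orbit n \<chi>"
      then obtain \<sigma>' where \<sigma>': "\<sigma>' \<in> fimor G n n" and x: "x = ficomp G n \<chi> \<sigma>'"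
        unfolding fi_orbit_def by blast
      have "x = ficomp G n \<phi> (ficomp G n \<sigma> \<sigma>')" unfolding x e by (rule ficomp_assoc[OF \<sigma>' \<sigma> \<phi>])
      then show "x \<in> fi_orbit n \<phi>" unfolding fi_orbit_def using ficomp_closed[OF \<sigma>' \<sigma>] by blast
    qed
  next
    show "fi_orbit n \<phi> \<subseteq> fi_orbit n \<chi>"
    proof
      fix x assume "x \<in> fi_orbit n \<phi>"
      then obtain \<sigma>' where \<sigma>': "\<sigma>' \<in> fimor G n n" and x: "x = ficomp G n \<phi> \<sigma>'"
        unfolding fi_orbit_def by blast
      have "ficomp G n \<chi> (ficomp G n \<tau> \<sigma>') = ficomp G n (ficomp G n \<chi> \<tau>) \<sigma>'"
        by (rule ficomp_assoc[OF \<sigma>' \<tau> ficomp_closed[OF \<sigma> \<phi>, folded e], symmetric])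
      also have "ficomp G n \<chi> \<tau> = \<phi>"
        unfolding e using ficomp_assoc[OF \<tau> \<sigma> \<phi>] st ficomp_fiid_right[OF \<phi>] by simp
      finally have "x = ficomp G n \<chi> (ficomp G n \<tau> \<sigma>')" using x by simp
      then show "x \<in> fi_orbit n \<chi>" unfolding fi_orbit_def using ficomp_closed[OF \<sigma>' \<tau>] by blast
    qed
  qed
qed

lemma orbit_rep_mem: "\<phi> \<in> fimor G n p \<Longrightarrow> orbit_rep n \<phi> \<in> fi_orbit n \<phi>"
  unfolding orbit_rep_def by (rule someI[of "\<lambda>\<chi>. \<chi> \<in> fi_orbit n \<phi>" \<phi>]) (rule fi_orbit_self)

lemma orbit_rep_closed: "\<phi> \<in> fimor G n p \<Longrightarrow> orbit_rep n \<phi> \<in> fimor G n p"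
  using fi_orbit_closed orbit_rep_mem by blast

lemma orbit_rep_eq: "\<phi> \<in> fimor G n p \<Longrightarrow> \<chi> \<in> fi_orbit n \<phi> \<Longrightarrow> orbit_rep n \<chi> = orbit_rep n \<phi>"
  unfolding orbit_rep_def using fi_orbit_eq by simp

lemma orbit_rep_comp:
  "\<phi> \<in> fimor G n p \<Longrightarrow> \<sigma> \<in> fimor G n n \<Longrightarrow> orbit_rep n (ficomp G n \<phi> \<sigma>) = orbit_rep n \<phi>"
  by (rule orbit_rep_eq) (unfold fi_orbit_def, blast+)

lemma orbit_rep_idem: "\<phi> \<in> fimor G n p \<Longrightarrow> orbit_rep n (orbit_rep n \<phi>) = orbit_rep n \<phi>"
  using orbit_rep_eq orbit_rep_mem by blast

lemma orbit_coord_ex: assumes \<phi>: "\<phi> \<in> fimor G n p"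
  shows "\<exists>\<sigma>. \<sigma> \<in> fimor G n n \<and> ficomp G n (orbit_rep n \<phi>) \<sigma> = \<phi>"
proof -
  obtain \<tau> where \<tau>: "\<tau> \<in> fimor G n n" and e: "orbit_rep n \<phi> = ficomp G n \<phi> \<tau>"
    using orbit_rep_mem[OF \<phi>] unfolding fi_orbit_def by blast
  obtain \<tau>' where \<tau>': "\<tau>' \<in> fimor G n n" and st: "ficomp G n \<tau> \<tau>' = fiid G n"
    using fimor_right_inverse[OF \<tau>] by blast
  have "ficomp G n (orbit_rep n \<phi>) \<tau>' = \<phi>"
    unfolding e using ficomp_assoc[OF \<tau>' \<tau> \<phi>] st ficomp_fiid_right[OF \<phi>] by simp
  then show ?thesis using \<tau>' by blast
qed

lemma orbit_coord_spec: assumes \<phi>: "\<phi> \<in> fimor G n p"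
  shows "orbit_coord n \<phi> \<in> fimor G n n \<and> ficomp G n (orbit_rep n \<phi>) (orbit_coord n \<phi>) = \<phi>"
proof -
  have "\<exists>!\<sigma>. \<sigma> \<in> fimor G n n \<and> ficomp G n (orbit_rep n \<phi>) \<sigma> = \<phi>"
  proof (rule ex_ex1I)
    show "\<exists>\<sigma>. \<sigma> \<in> fimor G n n \<and> ficomp G n (orbit_rep n \<phi>) \<sigma> = \<phi>" by (rule orbit_coord_ex[OF \<phi>])
  next
    fix x y assume x: "x \<in> fimor G n n \<and> ficomp G n (orbit_rep n \<phi>) x = \<phi>"
        and y: "y \<in> fimor G n n \<and> ficomp G n (orbit_rep n \<phi>) y = \<phi>"
    then have e: "ficomp G n (orbit_rep n \<phi>) x = ficomp G n (orbit_rep n \<phi>) y" by simp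
    show "x = y"
      using ficomp_left_cancel[OF orbit_rep_closed[OF \<phi>] conjunct1[OF x] conjunct1[OF y] e] .
  qed
  then show ?thesis unfolding orbit_coord_def by (rule theI')
qed

lemma orbit_coord_unique:
  "\<phi> \<in> fimor G n p \<Longrightarrow> \<sigma> \<in> fimor G n n \<Longrightarrow> ficomp G n (orbit_rep n \<phi>) \<sigma> = \<phi> \<Longrightarrow>
    orbit_coord n \<phi> = \<sigma>"
proof -
  assume a: "\<phi> \<in> fimor G n p" "\<sigma> \<in> fimor G n n" "ficomp G n (orbit_rep n \<phi>) \<sigma> = \<phi>"
  have "ficomp G n (orbit_rep n \<phi>) (orbit_coord n \<phi>) = ficomp G n (orbit_rep n \<phi>) \<sigma>"
    using orbit_coord_spec[OF a(1)] a(3) by simp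
  then show ?thesis
    using ficomp_left_cancel[OF orbit_rep_closed[OF a(1)] _ a(2)] orbit_coord_spec[OF a(1)] by blast
qed

lemma orbit_coord_comp:
  assumes \<phi>: "\<phi> \<in> fimor G n p" and \<sigma>: "\<sigma> \<in> fimor G n n"
  shows "orbit_coord n (ficomp G n \<phi> \<sigma>) = ficomp G n (orbit_coord n \<phi>) \<sigma>"
proof (rule orbit_coord_unique[OF ficomp_closed[OF \<sigma> \<phi>] ficomp_closed[OF \<sigma>]])
  show "orbit_coord n \<phi> \<in> fimor G n n" using orbit_coord_spec[OF \<phi>] by blast
  have "ficomp G n (orbit_rep n \<phi>) (ficomp G n (orbit_coord n \<phi>) \<sigma>)
      = ficomp G n (ficomp G n (orbit_rep n \<phi>) (orbit_coord n \<phi>)) \<sigma>"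
    using ficomp_assoc[OF \<sigma> _ orbit_rep_closed[OF \<phi>], of "orbit_coord n \<phi>"] orbit_coord_spec[OF \<phi>]
      by simp
  also have "\<dots> = ficomp G n \<phi> \<sigma>" using orbit_coord_spec[OF \<phi>] by simp
  finally show "ficomp G n (orbit_rep n (ficomp G n \<phi> \<sigma>)) (ficomp G n (orbit_coord n \<phi>) \<sigma>) =
      ficomp G n \<phi> \<sigma>"
    using orbit_rep_comp[OF \<phi> \<sigma>] by simp
qed

lemma orbit_coord_rep: "\<phi> \<in> fimor G n p \<Longrightarrow> orbit_rep n \<phi> = \<phi> \<Longrightarrow> orbit_coord n \<phi> = fiid G n"
proof -
  assume a: "\<phi> \<in> fimor G n p" "orbit_rep n \<phi> = \<phi>"
  show ?thesis
    by (rule orbit_coord_unique[OF a(1) fiid_closed]) (simp add: a(2) ficomp_fiid_right[OF a(1)])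
qed

end

section \<open>Sums of copies of W indexed by Hom([n],[p])\<close>

locale Mpre_family = fi_group G for G :: "'g monoid" (structure) +
  fixes R :: "'k ring" and W :: "('k, 'w) module" and n :: nat
  assumes R: "cring R" and W_module: "module R W"
begin

abbreviation Pre where "Pre p \<equiv> Mpre R G n W p"
abbreviation single where "single p \<equiv> dsingle (fimor G n p) (\<lambda>_. W)"
abbreviation supp where "supp p \<equiv> dsum_supp (fimor G n p) (\<lambda>_. W)"
abbreviation push where "push p q \<equiv> Mpush G n W p q"

lemma Pre_dsum_family: "dsum_family R (fimor G n p) (\<lambda>_. W)"
  by (rule dsum_family.intro[OF R W_module])

lemma Pre_eq_dsum: "Pre p = dsum R (fimor G n p) (\<lambda>_. W)"
  by (simp add: Mpre_def)

lemma Pre_module: "module R (Pre p)"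
  using dsum_family.dsum_is_module[OF Pre_dsum_family] by (simp add: Pre_eq_dsum)

lemma Pre_carrier: "F \<in> carrier (Pre p) \<longleftrightarrow> (\<forall>\<phi>\<in>fimor G n p. F \<phi> \<in> carrier W)
    \<and> (\<forall>\<phi>. \<phi> \<notin> fimor G n p \<longrightarrow> F \<phi> = undefined) \<and> finite (supp p F)"
  unfolding Pre_eq_dsum dsum_carrier by simp

lemma Pre_zero: "\<zero>\<^bsub>Pre p\<^esub> = (\<lambda>\<phi>. if \<phi> \<in> fimor G n p then \<zero>\<^bsub>W\<^esub> else undefined)"
  by (simp add: Pre_eq_dsum dsum_zero)

lemma Pre_add: "F \<oplus>\<^bsub>Pre p\<^esub> H = (\<lambda>\<phi>. if \<phi> \<in> fimor G n p then F \<phi> \<oplus>\<^bsub>W\<^esub> H \<phi> else undefined)"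
  by (simp add: Pre_eq_dsum dsum_add)

lemma Pre_smult: "a \<odot>\<^bsub>Pre p\<^esub> H = (\<lambda>\<phi>. if \<phi> \<in> fimor G n p then a \<odot>\<^bsub>W\<^esub> H \<phi> else undefined)"
  by (simp add: Pre_eq_dsum dsum_smult)

lemma Pre_coeff_closed: "F \<in> carrier (Pre p) \<Longrightarrow> \<phi> \<in> fimor G n p \<Longrightarrow> F \<phi> \<in> carrier W"
  by (simp add: Pre_carrier)

lemma supp_finite: "F \<in> carrier (Pre p) \<Longrightarrow> finite (supp p F)"
  by (simp add: Pre_carrier)

lemma supp_subset: "supp p F \<subseteq> fimor G n p"
  by (auto simp: dsum_supp_def)

lemma supp_memD: "\<phi> \<in> supp p F \<Longrightarrow> \<phi> \<in> fimor G n p"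
  by (simp add: dsum_supp_def)

lemma single_apply: "\<chi> \<in> fimor G n p \<Longrightarrow> single p \<phi> w \<chi> = (if \<chi> = \<phi> then w else \<zero>\<^bsub>W\<^esub>)"
  by (simp add: dsingle_def)

lemmas single_closed = dsum_family.dsingle_carrier[OF Pre_dsum_family, folded Pre_eq_dsum]
  and single_linmap = dsum_family.dsingle_linmap[OF Pre_dsum_family, folded Pre_eq_dsum]
  and Pre_eqI = dsum_family.dsum_eqI[OF Pre_dsum_family, folded Pre_eq_dsum]
  and Pre_decomp = dsum_family.dsum_decomp[OF Pre_dsum_family, folded Pre_eq_dsum]
  and finsum_Pre_apply = dsum_family.finsum_dsum_apply[OF Pre_dsum_family, folded Pre_eq_dsum]
  and linmap_Pre_expand = dsum_family.linmap_dsum_expand[OF Pre_dsum_family, folded Pre_eq_dsum]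
  and linmap_Pre_mem = dsum_family.linmap_dsum_mem[OF Pre_dsum_family, folded Pre_eq_dsum]
  and linmap_Pre_eqI = dsum_family.linmap_dsum_eqI[OF Pre_dsum_family, folded Pre_eq_dsum]

lemma push_apply_comp:
  assumes \<psi>: "\<psi> \<in> fimor G p q" and \<phi>: "\<phi> \<in> fimor G n p" and F: "F \<in> carrier (Pre p)"
  shows "push p q \<psi> F (ficomp G n \<psi> \<phi>) = F \<phi>"
proof -
  have S: "{\<phi>' \<in> fimor G n p. ficomp G n \<psi> \<phi>' = ficomp G n \<psi> \<phi>} = {\<phi>}"
    using ficomp_left_cancel[OF \<psi> _ \<phi>] \<phi> by auto
  have Fc: "F \<phi> \<in> carrier W" using F \<phi> by (simp add: Pre_carrier)
  interpret W: module R W by (rule W_module)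
  show ?thesis unfolding Mpush_def using ficomp_closed[OF \<phi> \<psi>] S Fc
    by (simp add: W.finsum_insert)
qed

lemma push_apply_other:
  assumes "\<chi> \<in> fimor G n q" and "\<chi> \<notin> ficomp G n \<psi> ` fimor G n p"
  shows "push p q \<psi> F \<chi> = \<zero>\<^bsub>W\<^esub>"
proof -
  have S: "{\<phi>' \<in> fimor G n p. ficomp G n \<psi> \<phi>' = \<chi>} = {}" using assms by auto
  interpret W: module R W by (rule W_module)
  have "push p q \<psi> F \<chi> = finsum W F {\<phi>' \<in> fimor G n p. ficomp G n \<psi> \<phi>' = \<chi>}"
    unfolding Mpush_def using assms(1) by simp
  also have "\<dots> = \<zero>\<^bsub>W\<^esub>" by (simp only: S W.finsum_empty)
  finally show ?thesis .
qed

lemma push_undefined: "\<chi> \<notin> fimor G n q \<Longrightarrow> push p q \<psi> F \<chi> = undefined"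
  by (simp add: Mpush_def)

lemma push_cases:
  assumes \<psi>: "\<psi> \<in> fimor G p q" and \<chi>: "\<chi> \<in> fimor G n q"
  obtains (hit) \<phi> where "\<phi> \<in> fimor G n p" "\<chi> = ficomp G n \<psi> \<phi>"
    | (miss) "\<chi> \<notin> ficomp G n \<psi> ` fimor G n p"
  by blast

lemma push_closed:
  assumes \<psi>: "\<psi> \<in> fimor G p q" and F: "F \<in> carrier (Pre p)"
  shows "push p q \<psi> F \<in> carrier (Pre q)"
proof -
  interpret W: module R W by (rule W_module)
  have vals: "push p q \<psi> F \<chi> \<in> carrier W" if \<chi>: "\<chi> \<in> fimor G n q" for \<chi>
    using \<psi> \<chi>
  proof (cases rule: push_cases)
    case (hit \<phi>) then show ?thesis using push_apply_comp[OF \<psi> hit(1) F] F by (simp add: Pre_carrier)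
  next
    case miss then show ?thesis using push_apply_other[OF \<chi> miss] by simp
  qed
  have "supp q (push p q \<psi> F) \<subseteq> ficomp G n \<psi> ` supp p F"
  proof
    fix \<chi> assume "\<chi> \<in> supp q (push p q \<psi> F)"
    then have \<chi>: "\<chi> \<in> fimor G n q" and nz: "push p q \<psi> F \<chi> \<noteq> \<zero>\<^bsub>W\<^esub>" by (auto simp: dsum_supp_def)
    from \<psi> \<chi> show "\<chi> \<in> ficomp G n \<psi> ` supp p F"
    proof (cases rule: push_cases)
      case (hit \<phi>) then show ?thesis
        using push_apply_comp[OF \<psi> hit(1) F] nz by (auto simp: dsum_supp_def)
    next
      case miss then show ?thesis using push_apply_other[OF \<chi> miss] nz by simp
    qed
  qed
  moreover have "finite (supp p F)" using F by (simp add: Pre_carrier)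
  ultimately have "finite (supp q (push p q \<psi> F))" using finite_subset by blast
  then show ?thesis using vals by (simp add: Pre_carrier push_undefined)
qed

lemma push_add:
  assumes \<psi>: "\<psi> \<in> fimor G p q" and x: "x \<in> carrier (Pre p)" and y: "y \<in> carrier (Pre p)"
  shows "push p q \<psi> (x \<oplus>\<^bsub>Pre p\<^esub> y) = push p q \<psi> x \<oplus>\<^bsub>Pre q\<^esub> push p q \<psi> y"
proof
  fix \<chi>
  interpret W: module R W by (rule W_module)
  have xy: "x \<oplus>\<^bsub>Pre p\<^esub> y \<in> carrier (Pre p)" using x y module.axioms(2)[OF Pre_module]
    by (simp add: abelian_groupE(1))
  show "push p q \<psi> (x \<oplus>\<^bsub>Pre p\<^esub> y) \<chi> = (push p q \<psi> x \<oplus>\<^bsub>Pre q\<^esub> push p q \<psi> y) \<chi>"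
  proof (cases "\<chi> \<in> fimor G n q")
    case \<chi>: True
    from \<psi> \<chi> show ?thesis
    proof (cases rule: push_cases)
      case (hit \<phi>) then show ?thesis
        using push_apply_comp[OF \<psi> hit(1)] x y xy \<chi> by (simp add: Pre_add)
    next
      case miss then show ?thesis using push_apply_other[OF \<chi> miss] \<chi> by (simp add: Pre_add)
    qed
  qed (simp add: push_undefined Pre_add)
qed

lemma push_smult:
  assumes \<psi>: "\<psi> \<in> fimor G p q" and a: "a \<in> carrier R" and x: "x \<in> carrier (Pre p)"
  shows "push p q \<psi> (a \<odot>\<^bsub>Pre p\<^esub> x) = a \<odot>\<^bsub>Pre q\<^esub> push p q \<psi> x"
proof
  fix \<chi>
  interpret W: module R W by (rule W_module)
  have ax: "a \<odot>\<^bsub>Pre p\<^esub> x \<in> carrier (Pre p)" using module.smult_closed[OF Pre_module a x] .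
  show "push p q \<psi> (a \<odot>\<^bsub>Pre p\<^esub> x) \<chi> = (a \<odot>\<^bsub>Pre q\<^esub> push p q \<psi> x) \<chi>"
  proof (cases "\<chi> \<in> fimor G n q")
    case \<chi>: True
    from \<psi> \<chi> show ?thesis
    proof (cases rule: push_cases)
      case (hit \<phi>) then show ?thesis
        using push_apply_comp[OF \<psi> hit(1)] x ax \<chi> by (simp add: Pre_smult)
    next
      case miss then show ?thesis using push_apply_other[OF \<chi> miss] \<chi> a by (simp add: Pre_smult)
    qed
  qed (simp add: push_undefined Pre_smult)
qed

lemma push_linmap: "\<psi> \<in> fimor G p q \<Longrightarrow> linmap R (Pre p) (Pre q) (push p q \<psi>)"
  by (rule linmapI) (simp_all add: push_closed push_add push_smult)

lemma push_single:
  assumes \<psi>: "\<psi> \<in> fimor G p q" and \<phi>: "\<phi> \<in> fimor G n p" and w: "w \<in> carrier W"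
  shows "push p q \<psi> (single p \<phi> w) = single q (ficomp G n \<psi> \<phi>) w"
proof (rule Pre_eqI)
  show "push p q \<psi> (single p \<phi> w) \<in> carrier (Pre q)" using push_closed[OF \<psi> single_closed[OF \<phi> w]] .
  show "single q (ficomp G n \<psi> \<phi>) w \<in> carrier (Pre q)"
    using single_closed[OF ficomp_closed[OF \<phi> \<psi>] w] .
  fix \<chi> assume \<chi>: "\<chi> \<in> fimor G n q"
  from \<psi> \<chi> show "push p q \<psi> (single p \<phi> w) \<chi> = single q (ficomp G n \<psi> \<phi>) w \<chi>"
  proof (cases rule: push_cases)
    case (hit \<phi>')
    have "(\<phi>' = \<phi>) = (ficomp G n \<psi> \<phi>' = ficomp G n \<psi> \<phi>)"
      using ficomp_left_cancel[OF \<psi> hit(1) \<phi>] by auto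
    then show ?thesis using push_apply_comp[OF \<psi> hit(1) single_closed[OF \<phi> w]] hit \<chi>
      by (simp add: single_apply)
  next
    case miss then show ?thesis using push_apply_other[OF \<chi> miss] \<chi> \<phi> by (auto simp: single_apply)
  qed
qed

lemma push_comp:
  assumes \<psi>: "\<psi> \<in> fimor G p q" and \<psi>': "\<psi>' \<in> fimor G q r" and F: "F \<in> carrier (Pre p)"
  shows "push p r (ficomp G p \<psi>' \<psi>) F = push q r \<psi>' (push p q \<psi> F)"
proof -
  have "push p r (ficomp G p \<psi>' \<psi>) F = (push q r \<psi>' \<circ> push p q \<psi>) F"
  proof (rule linmap_Pre_eqI[OF Pre_module _ _ _ F])
    show "linmap R (Pre p) (Pre r) (push p r (ficomp G p \<psi>' \<psi>))"
      by (rule push_linmap[OF ficomp_closed[OF \<psi> \<psi>']])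
    show "linmap R (Pre p) (Pre r) (push q r \<psi>' \<circ> push p q \<psi>)"
      by (rule linmap_comp[OF push_linmap[OF \<psi>] push_linmap[OF \<psi>']])
    fix \<phi> w assume \<phi>: "\<phi> \<in> fimor G n p" and w: "w \<in> carrier W"
    show "push p r (ficomp G p \<psi>' \<psi>) (single p \<phi> w) = (push q r \<psi>' \<circ> push p q \<psi>) (single p \<phi> w)"
      using push_single[OF ficomp_closed[OF \<psi> \<psi>'] \<phi> w] push_single[OF \<psi> \<phi> w]
        push_single[OF \<psi>' ficomp_closed[OF \<phi> \<psi>] w] ficomp_assoc[OF \<phi> \<psi> \<psi>']
      by simp
  qed
  then show ?thesis by simp
qed

lemma push_fiid:
  assumes F: "F \<in> carrier (Pre p)"
  shows "push p p (fiid G p) F = F"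
proof -
  have "push p p (fiid G p) F = id F"
  proof (rule linmap_Pre_eqI[OF Pre_module _ _ _ F])
    show "linmap R (Pre p) (Pre p) (push p p (fiid G p))" by (rule push_linmap[OF fiid_closed])
    show "linmap R (Pre p) (Pre p) id" by (rule linmapI) auto
    fix \<phi> w assume \<phi>: "\<phi> \<in> fimor G n p" and w: "w \<in> carrier W"
    show "push p p (fiid G p) (single p \<phi> w) = id (single p \<phi> w)"
      using push_single[OF fiid_closed \<phi> w] ficomp_fiid_left[OF \<phi>] by simp
  qed
  then show ?thesis by simp
qed

definition is_normal :: "nat \<Rightarrow> ('g fimor \<Rightarrow> 'w) \<Rightarrow> bool" where
  "is_normal p F \<longleftrightarrow> (\<forall>\<phi>\<in>supp p F. orbit_rep n \<phi> = \<phi>)"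

definition lin_ext :: "('k, 'x) module \<Rightarrow> ('g fimor \<Rightarrow> 'w \<Rightarrow> 'x) \<Rightarrow> nat \<Rightarrow> ('g fimor \<Rightarrow> 'w) \<Rightarrow> 'x" where
  "lin_ext X act p F = finsum X (\<lambda>\<phi>. act \<phi> (F \<phi>)) (supp p F)"

lemma lin_ext_superset:
  assumes X: "module R X" and act: "\<And>\<phi>. \<phi> \<in> fimor G n p \<Longrightarrow> linmap R W X (act \<phi>)"
    and F: "F \<in> carrier (Pre p)" and S: "finite S" "supp p F \<subseteq> S" "S \<subseteq> fimor G n p"
  shows "lin_ext X act p F = finsum X (\<lambda>\<phi>. act \<phi> (F \<phi>)) S"
proof -
  interpret X: module R X by fact
  interpret W: module R W by (rule W_module)
  show ?thesis unfolding lin_ext_def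
  proof (rule X.add.finprod_mono_neutral_cong_left[OF S(1) S(2)])
    fix i assume i: "i \<in> S - supp p F"
    have iI: "i \<in> fimor G n p" using i S(3) by blast
    then have "F i = \<zero>\<^bsub>W\<^esub>" using i by (simp add: dsum_supp_def)
    then show "act i (F i) = \<zero>\<^bsub>X\<^esub>" using linmap_zero[OF W_module X act[OF iI]] by simp
  next
    show "(\<lambda>\<phi>. act \<phi> (F \<phi>)) \<in> S \<rightarrow> carrier X"
      using S(3) linmapD(1)[OF act] Pre_coeff_closed[OF F] by auto
  qed simp
qed

lemma lin_ext_closed:
  assumes X: "module R X" and act: "\<And>\<phi>. \<phi> \<in> fimor G n p \<Longrightarrow> linmap R W X (act \<phi>)"
    and F: "F \<in> carrier (Pre p)"
  shows "lin_ext X act p F \<in> carrier X"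
proof -
  interpret X: module R X by fact
  show ?thesis unfolding lin_ext_def
    by (rule X.finsum_closed) (use supp_memD linmapD(1)[OF act] Pre_coeff_closed[OF F] in auto)
qed

lemma lin_ext_add:
  assumes X: "module R X" and act: "\<And>\<phi>. \<phi> \<in> fimor G n p \<Longrightarrow> linmap R W X (act \<phi>)"
    and F: "F \<in> carrier (Pre p)" and H: "H \<in> carrier (Pre p)"
  shows "lin_ext X act p (F \<oplus>\<^bsub>Pre p\<^esub> H) = lin_ext X act p F \<oplus>\<^bsub>X\<^esub> lin_ext X act p H"
proof -
  interpret X: module R X by fact
  interpret W: module R W by (rule W_module)
  interpret Pp: module R "Pre p" by (rule Pre_module)
  let ?S = "supp p F \<union> supp p H"
  have fin: "finite ?S" using supp_finite[OF F] supp_finite[OF H] by simp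
  have Ssub: "?S \<subseteq> fimor G n p" using supp_subset by auto
  have SsubD: "\<phi> \<in> ?S \<Longrightarrow> \<phi> \<in> fimor G n p" for \<phi> using supp_memD by blast
  have FH: "F \<oplus>\<^bsub>Pre p\<^esub> H \<in> carrier (Pre p)" using F H by simp
  have spFH: "supp p (F \<oplus>\<^bsub>Pre p\<^esub> H) \<subseteq> ?S"
    using Pre_coeff_closed[OF F] Pre_coeff_closed[OF H] by (auto simp: dsum_supp_def Pre_add)
  have "lin_ext X act p (F \<oplus>\<^bsub>Pre p\<^esub> H) = finsum X (\<lambda>\<phi>. act \<phi> ((F \<oplus>\<^bsub>Pre p\<^esub> H) \<phi>)) ?S"
    by (rule lin_ext_superset[OF X act FH fin spFH Ssub])
  also have "\<dots> = finsum X (\<lambda>\<phi>. act \<phi> (F \<phi>) \<oplus>\<^bsub>X\<^esub> act \<phi> (H \<phi>)) ?S"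
    by (rule X.finsum_cong')
      (use SsubD Pre_coeff_closed[OF F] Pre_coeff_closed[OF H] linmapD[OF act]
        in \<open>auto simp: Pre_add\<close>)
  also have "\<dots> = finsum X (\<lambda>\<phi>. act \<phi> (F \<phi>)) ?S \<oplus>\<^bsub>X\<^esub> finsum X (\<lambda>\<phi>. act \<phi> (H \<phi>)) ?S"
    by (rule X.finsum_addf)
      (use SsubD Pre_coeff_closed[OF F] Pre_coeff_closed[OF H] linmapD[OF act] in auto)
  also have "\<dots> = lin_ext X act p F \<oplus>\<^bsub>X\<^esub> lin_ext X act p H"
    using lin_ext_superset[OF X act F fin _ Ssub] lin_ext_superset[OF X act H fin _ Ssub] by simp
  finally show ?thesis .
qed

lemma lin_ext_smult:
  assumes X: "module R X" and act: "\<And>\<phi>. \<phi> \<in> fimor G n p \<Longrightarrow> linmap R W X (act \<phi>)"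
    and a: "a \<in> carrier R" and F: "F \<in> carrier (Pre p)"
  shows "lin_ext X act p (a \<odot>\<^bsub>Pre p\<^esub> F) = a \<odot>\<^bsub>X\<^esub> lin_ext X act p F"
proof -
  interpret X: module R X by fact
  interpret W: module R W by (rule W_module)
  interpret Pp: module R "Pre p" by (rule Pre_module)
  have fin: "finite (supp p F)" using supp_finite[OF F] .
  have aF: "a \<odot>\<^bsub>Pre p\<^esub> F \<in> carrier (Pre p)" using a F by simp
  have sp: "supp p (a \<odot>\<^bsub>Pre p\<^esub> F) \<subseteq> supp p F"
    using Pre_coeff_closed[OF F] a by (auto simp: dsum_supp_def Pre_smult)
  have "lin_ext X act p (a \<odot>\<^bsub>Pre p\<^esub> F) = finsum X (\<lambda>\<phi>. act \<phi> ((a \<odot>\<^bsub>Pre p\<^esub> F) \<phi>)) (supp p F)"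
    by (rule lin_ext_superset[OF X act aF fin sp supp_subset])
  also have "\<dots> = finsum X (\<lambda>\<phi>. a \<odot>\<^bsub>X\<^esub> act \<phi> (F \<phi>)) (supp p F)"
    by (rule X.finsum_cong')
      (use supp_memD Pre_coeff_closed[OF F] linmapD[OF act] a in \<open>auto simp: Pre_smult\<close>)
  also have "\<dots> = a \<odot>\<^bsub>X\<^esub> lin_ext X act p F"
    unfolding lin_ext_def
    by (rule X.finsum_smult_ldistr[symmetric, OF fin a])
      (use supp_memD Pre_coeff_closed[OF F] linmapD[OF act] in auto)
  finally show ?thesis .
qed

lemma lin_ext_linmap:
  assumes X: "module R X" and act: "\<And>\<phi>. \<phi> \<in> fimor G n p \<Longrightarrow> linmap R W X (act \<phi>)"
  shows "linmap R (Pre p) X (lin_ext X act p)"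
  by (rule linmapI) (simp_all add: lin_ext_closed[OF X act] lin_ext_add[OF X act]
      lin_ext_smult[OF X act])

lemma lin_ext_single:
  assumes X: "module R X" and act: "\<And>\<phi>. \<phi> \<in> fimor G n p \<Longrightarrow> linmap R W X (act \<phi>)"
    and \<phi>: "\<phi> \<in> fimor G n p" and w: "w \<in> carrier W"
  shows "lin_ext X act p (single p \<phi> w) = act \<phi> w"
proof -
  interpret X: module R X by fact
  have sp: "supp p (single p \<phi> w) \<subseteq> {\<phi>}"
  proof
    fix \<chi> assume "\<chi> \<in> supp p (single p \<phi> w)" then show "\<chi> \<in> {\<phi>}"
      by (cases "\<chi> = \<phi>") (auto simp add: dsum_supp_def single_apply)
  qed
  have "lin_ext X act p (single p \<phi> w) = finsum X (\<lambda>\<chi>. act \<chi> (single p \<phi> w \<chi>)) {\<phi>}"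
    by (rule lin_ext_superset[OF X act single_closed[OF \<phi> w] _ sp]) (use \<phi> in auto)
  also have "\<dots> = act \<phi> w" using \<phi> linmapD(1)[OF act[OF \<phi>] w] by (simp add: single_apply)
  finally show ?thesis .
qed

end

section \<open>The modules M(W): relations and normal forms\<close>

locale MW_data = Mpre_family G R W n for G :: "'g monoid" (structure) and R :: "'k ring"
    and W :: "('k, 'w) module" and n :: nat +
  fixes \<rho> :: "'g fimor \<Rightarrow> 'w \<Rightarrow> 'w"
  assumes W_grp_mod: "grp_mod R G n W \<rho>"
begin

abbreviation Rel where "Rel p \<equiv> Mrel R G n W \<rho> p"

lemma rho_linmap: "\<sigma> \<in> fimor G n n \<Longrightarrow> linmap R W W (\<rho> \<sigma>)"
  using W_grp_mod by (simp add: grp_mod_def)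

lemma rho_id: "w \<in> carrier W \<Longrightarrow> \<rho> (fiid G n) w = w"
  using W_grp_mod by (simp add: grp_mod_def)

lemma rho_comp: "\<sigma> \<in> fimor G n n \<Longrightarrow> \<tau> \<in> fimor G n n \<Longrightarrow> w \<in> carrier W \<Longrightarrow>
    \<rho> (ficomp G n \<sigma> \<tau>) w = \<rho> \<sigma> (\<rho> \<tau> w)"
  using W_grp_mod by (simp add: grp_mod_def)

lemma rho_closed: "\<sigma> \<in> fimor G n n \<Longrightarrow> w \<in> carrier W \<Longrightarrow> \<rho> \<sigma> w \<in> carrier W"
  using linmapD(1)[OF rho_linmap] .

definition rel_gens :: "nat \<Rightarrow> ('g fimor \<Rightarrow> 'w) set" where
  "rel_gens p = {single p (ficomp G n \<phi> \<sigma>) w \<ominus>\<^bsub>Pre p\<^esub> single p \<phi> (\<rho> \<sigma> w)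
      | \<phi> \<sigma> w. \<phi> \<in> fimor G n p \<and> \<sigma> \<in> fimor G n n \<and> w \<in> carrier W}"

lemma Rel_eq_kspan: "Rel p = kspan R (Pre p) (rel_gens p)"
  by (simp add: Mrel_def rel_gens_def)

lemma rel_gens_subset: "rel_gens p \<subseteq> carrier (Pre p)"
proof -
  interpret Pp: module R "Pre p" by (rule Pre_module)
  show ?thesis
  proof
    fix g assume "g \<in> rel_gens p"
    then obtain \<phi> \<sigma> w where g: "g = single p (ficomp G n \<phi> \<sigma>) w \<ominus>\<^bsub>Pre p\<^esub> single p \<phi> (\<rho> \<sigma> w)"
      and \<phi>: "\<phi> \<in> fimor G n p" and \<sigma>: "\<sigma> \<in> fimor G n n" and w: "w \<in> carrier W"
      unfolding rel_gens_def by blast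
    show "g \<in> carrier (Pre p)" unfolding g
      by (rule Pp.minus_closed[OF single_closed[OF ficomp_closed[OF \<sigma> \<phi>] w]
            single_closed[OF \<phi> rho_closed[OF \<sigma> w]]])
  qed
qed

lemma Rel_submodule: "submodule (Rel p) R (Pre p)"
  unfolding Rel_eq_kspan by (rule kspan_submodule[OF Pre_module rel_gens_subset])

lemma rel_gen_mem: "\<phi> \<in> fimor G n p \<Longrightarrow> \<sigma> \<in> fimor G n n \<Longrightarrow> w \<in> carrier W \<Longrightarrow>
    single p (ficomp G n \<phi> \<sigma>) w \<ominus>\<^bsub>Pre p\<^esub> single p \<phi> (\<rho> \<sigma> w) \<in> Rel p"
proof -
  assume a: "\<phi> \<in> fimor G n p" "\<sigma> \<in> fimor G n n" "w \<in> carrier W"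
  have "single p (ficomp G n \<phi> \<sigma>) w \<ominus>\<^bsub>Pre p\<^esub> single p \<phi> (\<rho> \<sigma> w) \<in> rel_gens p"
    unfolding rel_gens_def using a by blast
  then show ?thesis unfolding Rel_eq_kspan using kspan_incl[of "rel_gens p" R "Pre p"] by blast
qed

lemma Rel_least: "submodule X R (Pre p) \<Longrightarrow> rel_gens p \<subseteq> X \<Longrightarrow> Rel p \<subseteq> X"
  unfolding Rel_eq_kspan by (rule kspan_least)

lemma Rel_quotient: "quotient_module R (Pre p) (Rel p)"
  by (intro quotient_module.intro quotient_module_axioms.intro Pre_module Rel_submodule)

lemma linmap_Rel_mem:
  assumes N: "module R N" and L: "linmap R (Pre p) N L" and X: "submodule X R N"
    and gen: "\<And>\<phi> \<sigma> w. \<phi> \<in> fimor G n p \<Longrightarrow> \<sigma> \<in> fimor G n n \<Longrightarrow> w \<in> carrier W \<Longrightarrow>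
        L (single p (ficomp G n \<phi> \<sigma>) w) \<ominus>\<^bsub>N\<^esub> L (single p \<phi> (\<rho> \<sigma> w)) \<in> X"
    and F: "F \<in> Rel p"
  shows "L F \<in> X"
proof -
  let ?K = "{F \<in> carrier (Pre p). L F \<in> X}"
  have "rel_gens p \<subseteq> ?K"
  proof
    fix g assume "g \<in> rel_gens p"
    then obtain \<phi> \<sigma> w where g: "g = single p (ficomp G n \<phi> \<sigma>) w \<ominus>\<^bsub>Pre p\<^esub> single p \<phi> (\<rho> \<sigma> w)"
      and \<phi>: "\<phi> \<in> fimor G n p" and \<sigma>: "\<sigma> \<in> fimor G n n" and w: "w \<in> carrier W"
      unfolding rel_gens_def by blast
    have "L g = L (single p (ficomp G n \<phi> \<sigma>) w) \<ominus>\<^bsub>N\<^esub> L (single p \<phi> (\<rho> \<sigma> w))"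
      unfolding g by (rule linmap_minus[OF Pre_module N L single_closed[OF ficomp_closed[OF \<sigma> \<phi>] w]
            single_closed[OF \<phi> rho_closed[OF \<sigma> w]]])
    then show "g \<in> ?K" using gen[OF \<phi> \<sigma> w] rel_gens_subset \<open>g \<in> rel_gens p\<close> by auto
  qed
  then have "Rel p \<subseteq> ?K" by (rule Rel_least[OF linmap_preimage_submodule[OF Pre_module N L X]])
  then show ?thesis using F by auto
qed

lemma lin_ext_Rel:
  assumes X: "module R X" and act: "\<And>\<phi>. \<phi> \<in> fimor G n p \<Longrightarrow> linmap R W X (act \<phi>)"
    and compat: "\<And>\<phi> \<sigma> w. \<phi> \<in> fimor G n p \<Longrightarrow> \<sigma> \<in> fimor G n n \<Longrightarrow> w \<in> carrier W \<Longrightarrow>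
        act (ficomp G n \<phi> \<sigma>) w = act \<phi> (\<rho> \<sigma> w)"
    and F: "F \<in> Rel p"
  shows "lin_ext X act p F = \<zero>\<^bsub>X\<^esub>"
proof -
  interpret X: module R X by fact
  have "lin_ext X act p F \<in> {\<zero>\<^bsub>X\<^esub>}"
  proof (rule linmap_Rel_mem[OF X lin_ext_linmap[OF X act] zero_submodule[OF X] _ F])
    fix \<phi> \<sigma> w assume \<phi>: "\<phi> \<in> fimor G n p" and \<sigma>: "\<sigma> \<in> fimor G n n" and w: "w \<in> carrier W"
    show "lin_ext X act p (single p (ficomp G n \<phi> \<sigma>) w) \<ominus>\<^bsub>X\<^esub> lin_ext X act p (single p \<phi> (\<rho> \<sigma> w))
        \<in> {\<zero>\<^bsub>X\<^esub>}"
      using lin_ext_single[OF X act ficomp_closed[OF \<sigma> \<phi>] w]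
        lin_ext_single[OF X act \<phi> rho_closed[OF \<sigma> w]]
        compat[OF \<phi> \<sigma> w] linmapD(1)[OF act[OF \<phi>] rho_closed[OF \<sigma> w]]
      by (simp add: X.r_neg X.minus_eq)
  qed
  then show ?thesis by simp
qed

lemma push_Rel:
  assumes \<psi>: "\<psi> \<in> fimor G p q" and F: "F \<in> Rel p"
  shows "push p q \<psi> F \<in> Rel q"
proof (rule linmap_Rel_mem[OF Pre_module push_linmap[OF \<psi>] Rel_submodule _ F])
  fix \<phi> \<sigma> w assume \<phi>: "\<phi> \<in> fimor G n p" and \<sigma>: "\<sigma> \<in> fimor G n n" and w: "w \<in> carrier W"
  show "push p q \<psi> (single p (ficomp G n \<phi> \<sigma>) w) \<ominus>\<^bsub>Pre q\<^esub> push p q \<psi> (single p \<phi> (\<rho> \<sigma> w)) \<in> Rel q"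
    using push_single[OF \<psi> ficomp_closed[OF \<sigma> \<phi>] w] push_single[OF \<psi> \<phi> rho_closed[OF \<sigma> w]]
      ficomp_assoc[OF \<sigma> \<phi> \<psi>] rel_gen_mem[OF ficomp_closed[OF \<phi> \<psi>] \<sigma> w]
    by simp
qed

definition nf_single :: "nat \<Rightarrow> 'g fimor \<Rightarrow> 'w \<Rightarrow> 'g fimor \<Rightarrow> 'w" where
  "nf_single p \<phi> w = single p (orbit_rep n \<phi>) (\<rho> (orbit_coord n \<phi>) w)"
definition normal_form :: "nat \<Rightarrow> ('g fimor \<Rightarrow> 'w) \<Rightarrow> 'g fimor \<Rightarrow> 'w" where
  "normal_form p = lin_ext (Pre p) (nf_single p) p"

lemma nf_single_linmap: "\<phi> \<in> fimor G n p \<Longrightarrow> linmap R W (Pre p) (nf_single p \<phi>)"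
  unfolding nf_single_def
  using linmap_comp[OF rho_linmap single_linmap[OF orbit_rep_closed]] orbit_coord_spec
    by (simp add: comp_def)

lemma nf_single_compat: "\<phi> \<in> fimor G n p \<Longrightarrow> \<sigma> \<in> fimor G n n \<Longrightarrow> w \<in> carrier W \<Longrightarrow>
    nf_single p (ficomp G n \<phi> \<sigma>) w = nf_single p \<phi> (\<rho> \<sigma> w)"
  unfolding nf_single_def using orbit_rep_comp orbit_coord_comp rho_comp orbit_coord_spec by simp

lemma normal_form_linmap: "linmap R (Pre p) (Pre p) (normal_form p)"
  unfolding normal_form_def by (rule lin_ext_linmap[OF Pre_module nf_single_linmap])

lemma normal_form_single:
  "\<phi> \<in> fimor G n p \<Longrightarrow> w \<in> carrier W \<Longrightarrow>
    normal_form p (single p \<phi> w) = single p (orbit_rep n \<phi>) (\<rho> (orbit_coord n \<phi>) w)"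
  unfolding normal_form_def using lin_ext_single[OF Pre_module nf_single_linmap]
  by (simp add: nf_single_def)

lemma normal_form_Rel: "F \<in> Rel p \<Longrightarrow> normal_form p F = \<zero>\<^bsub>Pre p\<^esub>"
  unfolding normal_form_def by (rule lin_ext_Rel[OF Pre_module nf_single_linmap nf_single_compat])

lemma normal_form_diff_Rel:
  assumes F: "F \<in> carrier (Pre p)"
  shows "F \<ominus>\<^bsub>Pre p\<^esub> normal_form p F \<in> Rel p"
proof -
  have L: "linmap R (Pre p) (Pre p) (\<lambda>F. id F \<ominus>\<^bsub>Pre p\<^esub> normal_form p F)"
    by (rule linmap_diff[OF Pre_module Pre_module _ normal_form_linmap]) (rule linmapI, auto)
  have "(\<lambda>F. id F \<ominus>\<^bsub>Pre p\<^esub> normal_form p F) F \<in> Rel p"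
  proof (rule linmap_Pre_mem[OF Pre_module L Rel_submodule _ F])
    fix \<phi> w assume \<phi>: "\<phi> \<in> fimor G n p" and w: "w \<in> carrier W"
    have "single p \<phi> w = single p (ficomp G n (orbit_rep n \<phi>) (orbit_coord n \<phi>)) w"
      using orbit_coord_spec[OF \<phi>] by simp
    then show "id (single p \<phi> w) \<ominus>\<^bsub>Pre p\<^esub> normal_form p (single p \<phi> w) \<in> Rel p"
      using normal_form_single[OF \<phi> w]
        rel_gen_mem[OF orbit_rep_closed[OF \<phi>] conjunct1[OF orbit_coord_spec[OF \<phi>]] w]
      by simp
  qed
  then show ?thesis by simp
qed

lemma normal_form_fixed:
  assumes F: "F \<in> carrier (Pre p)" and r: "is_normal p F"
  shows "normal_form p F = F"
proof -
  interpret Pp: module R "Pre p" by (rule Pre_module)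
  have "normal_form p F = finsum (Pre p) (\<lambda>\<phi>. normal_form p (single p \<phi> (F \<phi>))) (supp p F)"
    by (rule linmap_Pre_expand[OF Pre_module normal_form_linmap F])
  also have "\<dots> = finsum (Pre p) (\<lambda>\<phi>. single p \<phi> (F \<phi>)) (supp p F)"
  proof (rule Pp.finsum_cong')
    fix \<phi> assume \<phi>s: "\<phi> \<in> supp p F"
    have \<phi>: "\<phi> \<in> fimor G n p" using supp_memD[OF \<phi>s] .
    have rep: "orbit_rep n \<phi> = \<phi>" using r \<phi>s by (simp add: is_normal_def)
    show "normal_form p (single p \<phi> (F \<phi>)) = single p \<phi> (F \<phi>)"
      using normal_form_single[OF \<phi> Pre_coeff_closed[OF F \<phi>]] rep orbit_coord_rep[OF \<phi> rep]
          rho_id[OF Pre_coeff_closed[OF F \<phi>]] by simp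
  next
    show "(\<lambda>\<phi>. single p \<phi> (F \<phi>)) \<in> supp p F \<rightarrow> carrier (Pre p)"
      using single_closed supp_memD Pre_coeff_closed[OF F] by blast
  qed simp
  also have "\<dots> = F" by (rule Pre_decomp[OF F])
  finally show ?thesis .
qed

lemma normal_form_is_normal:
  assumes F: "F \<in> carrier (Pre p)"
  shows "is_normal p (normal_form p F)"
  unfolding is_normal_def
proof
  fix \<chi> assume \<chi>s: "\<chi> \<in> supp p (normal_form p F)"
  have \<chi>: "\<chi> \<in> fimor G n p" using supp_memD[OF \<chi>s] .
  show "orbit_rep n \<chi> = \<chi>"
  proof (rule ccontr)
    assume nr: "orbit_rep n \<chi> \<noteq> \<chi>"
    interpret W: module R W by (rule W_module)
    have cl: "(\<lambda>\<phi>. nf_single p \<phi> (F \<phi>)) \<in> supp p F \<rightarrow> carrier (Pre p)"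
      using linmapD(1)[OF nf_single_linmap] supp_memD Pre_coeff_closed[OF F] by blast
    have "normal_form p F \<chi> = finsum W (\<lambda>\<phi>. nf_single p \<phi> (F \<phi>) \<chi>) (supp p F)"
      unfolding normal_form_def lin_ext_def by (rule finsum_Pre_apply[OF supp_finite[OF F] cl \<chi>])
    also have "\<dots> = \<zero>\<^bsub>W\<^esub>"
    proof (rule W.add.finprod_one_eqI)
      fix \<phi> assume \<phi>s: "\<phi> \<in> supp p F"
      have \<phi>: "\<phi> \<in> fimor G n p" using supp_memD[OF \<phi>s] .
      have "\<chi> \<noteq> orbit_rep n \<phi>" using nr orbit_rep_idem[OF \<phi>] by auto
      then show "nf_single p \<phi> (F \<phi>) \<chi> = \<zero>\<^bsub>W\<^esub>" using \<chi> by (simp add: nf_single_def single_apply)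
    qed
    finally show False using \<chi>s by (simp add: dsum_supp_def)
  qed
qed

lemma normal_form_closed: "F \<in> carrier (Pre p) \<Longrightarrow> normal_form p F \<in> carrier (Pre p)"
  using linmapD(1)[OF normal_form_linmap] .

lemma Rel_iff_normal_form_zero:
  assumes F: "F \<in> carrier (Pre p)"
  shows "F \<in> Rel p \<longleftrightarrow> normal_form p F = \<zero>\<^bsub>Pre p\<^esub>"
proof
  assume "F \<in> Rel p" then show "normal_form p F = \<zero>\<^bsub>Pre p\<^esub>" by (rule normal_form_Rel)
next
  interpret Pp: module R "Pre p" by (rule Pre_module)
  assume "normal_form p F = \<zero>\<^bsub>Pre p\<^esub>"
  then have "F \<ominus>\<^bsub>Pre p\<^esub> normal_form p F = F" using F by (simp add: Pp.minus_eq Pp.a_inv_zero)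
  then show "F \<in> Rel p" using normal_form_diff_Rel[OF F] by simp
qed

lemma Rel_if_normal_form_vanishes:
  assumes F: "F \<in> carrier (Pre p)" and z: "\<And>\<phi>. \<phi> \<in> fimor G n p \<Longrightarrow> normal_form p F \<phi> = \<zero>\<^bsub>W\<^esub>"
  shows "F \<in> Rel p"
proof -
  have "normal_form p F = \<zero>\<^bsub>Pre p\<^esub>"
  proof (rule Pre_eqI[OF normal_form_closed[OF F]])
    show "\<zero>\<^bsub>Pre p\<^esub> \<in> carrier (Pre p)"
      using module.axioms(2)[OF Pre_module] by (rule abelian_groupE(2))
  qed (simp add: z Pre_zero)
  then show ?thesis using Rel_iff_normal_form_zero[OF F] by simp
qed

lemma normal_eq_if_diff_Rel:
  assumes F: "F \<in> carrier (Pre p)" and H: "H \<in> carrier (Pre p)" and rF: "is_normal p F"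
      and rH: "is_normal p H"
    and d: "F \<ominus>\<^bsub>Pre p\<^esub> H \<in> Rel p"
  shows "F = H"
proof -
  interpret Pp: module R "Pre p" by (rule Pre_module)
  have "normal_form p (F \<ominus>\<^bsub>Pre p\<^esub> H) = F \<ominus>\<^bsub>Pre p\<^esub> H"
    using linmap_minus[OF Pre_module Pre_module normal_form_linmap F H]
      normal_form_fixed[OF F rF] normal_form_fixed[OF H rH]
    by simp
  then have "F \<ominus>\<^bsub>Pre p\<^esub> H = \<zero>\<^bsub>Pre p\<^esub>" using normal_form_Rel[OF d] by simp
  then show ?thesis using Pp.minus_zero_imp_eq F H by blast
qed

abbreviation collapse where "collapse \<equiv> lin_ext W \<rho> n"

lemma collapse_linmap: "linmap R (Pre n) W collapse"
  by (rule lin_ext_linmap[OF W_module rho_linmap])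

lemma collapse_single: "\<sigma> \<in> fimor G n n \<Longrightarrow> w \<in> carrier W \<Longrightarrow> collapse (single n \<sigma> w) = \<rho> \<sigma> w"
  by (rule lin_ext_single[OF W_module rho_linmap])

lemma collapse_Rel: "F \<in> Rel n \<Longrightarrow> collapse F = \<zero>\<^bsub>W\<^esub>"
  by (rule lin_ext_Rel[OF W_module rho_linmap rho_comp])

lemma collapse_closed: "F \<in> carrier (Pre n) \<Longrightarrow> collapse F \<in> carrier W"
  using linmapD(1)[OF collapse_linmap] .

lemma push_collapse_diff_Rel:
  assumes \<psi>: "\<psi> \<in> fimor G n p" and x: "x \<in> carrier (Pre n)"
  shows "push n p \<psi> x \<ominus>\<^bsub>Pre p\<^esub> single p \<psi> (collapse x) \<in> Rel p"
proof -
  have L: "linmap R (Pre n) (Pre p) (\<lambda>x. push n p \<psi> x \<ominus>\<^bsub>Pre p\<^esub> (single p \<psi> \<circ> collapse) x)"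
    by (rule linmap_diff[OF Pre_module Pre_module push_linmap[OF \<psi>]
          linmap_comp[OF collapse_linmap single_linmap[OF \<psi>]]])
  have "(\<lambda>x. push n p \<psi> x \<ominus>\<^bsub>Pre p\<^esub> (single p \<psi> \<circ> collapse) x) x \<in> Rel p"
  proof (rule linmap_Pre_mem[OF Pre_module L Rel_submodule _ x])
    fix \<sigma> w assume \<sigma>: "\<sigma> \<in> fimor G n n" and w: "w \<in> carrier W"
    show "push n p \<psi> (single n \<sigma> w) \<ominus>\<^bsub>Pre p\<^esub> (single p \<psi> \<circ> collapse) (single n \<sigma> w) \<in> Rel p"
      using push_single[OF \<psi> \<sigma> w] collapse_single[OF \<sigma> w] rel_gen_mem[OF \<psi> \<sigma> w] by simp
  qed
  then show ?thesis by simp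
qed

lemma collapse_diff_Rel:
  assumes x: "x \<in> carrier (Pre n)"
  shows "x \<ominus>\<^bsub>Pre n\<^esub> single n (fiid G n) (collapse x) \<in> Rel n"
  using push_collapse_diff_Rel[OF fiid_closed x] push_fiid[OF x] by simp

lemma collapse_zero_imp_Rel:
  assumes x: "x \<in> carrier (Pre n)" and e: "collapse x = \<zero>\<^bsub>W\<^esub>"
  shows "x \<in> Rel n"
proof -
  interpret Pn: module R "Pre n" by (rule Pre_module)
  have "single n (fiid G n) \<zero>\<^bsub>W\<^esub> = \<zero>\<^bsub>Pre n\<^esub>"
    using linmap_zero[OF W_module Pre_module single_linmap[OF fiid_closed]] .
  then show ?thesis using collapse_diff_Rel[OF x] e x by (simp add: Pn.minus_eq Pn.a_inv_zero)
qed

abbreviation Quo where "Quo p \<equiv> quotmod (Pre p) (Rel p)"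
abbreviation cls where "cls p \<equiv> qcls (Pre p) (Rel p)"
abbreviation MWm where "MWm \<equiv> MW R G n W \<rho>"

lemma Obj_MW: "Obj MWm p = Quo p"
  by (simp add: MW_def)

lemma Act_MW: "Act MWm p q \<psi> A = cls q (push p q \<psi> (qrep A))"
  by (simp add: MW_def)

lemmas Quo_module = quotient_module.quotmod_is_module[OF Rel_quotient]
  and Quo_carrier = quotient_module.quotmod_carrier[OF Rel_quotient]
  and cls_closed = quotient_module.cls_closed[OF Rel_quotient]
  and cls_linmap = quotient_module.cls_linmap[OF Rel_quotient]
  and cls_eq_iff = quotient_module.cls_eq_iff[OF Rel_quotient]
  and cls_zero_iff = quotient_module.cls_zero_iff[OF Rel_quotient]
  and qrep_closed = quotient_module.qrep_closed[OF Rel_quotient]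
  and cls_qrep = quotient_module.cls_qrep[OF Rel_quotient]
  and linmap_qrep_cls = quotient_module.linmap_qrep_cls[OF Rel_quotient]
  and linmap_qrep = quotient_module.linmap_qrep[OF Rel_quotient]

lemma lin_ext_Rel_eq:
  assumes X: "module R X" and act: "\<And>\<phi>. \<phi> \<in> fimor G n p \<Longrightarrow> linmap R W X (act \<phi>)"
    and compat: "\<And>\<phi> \<sigma> w. \<phi> \<in> fimor G n p \<Longrightarrow> \<sigma> \<in> fimor G n n \<Longrightarrow> w \<in> carrier W \<Longrightarrow>
        act (ficomp G n \<phi> \<sigma>) w = act \<phi> (\<rho> \<sigma> w)"
    and x: "x \<in> carrier (Pre p)" and y: "y \<in> carrier (Pre p)" and d: "x \<ominus>\<^bsub>Pre p\<^esub> y \<in> Rel p"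
  shows "lin_ext X act p x = lin_ext X act p y"
proof -
  interpret X: module R X by fact
  have lm: "linmap R (Pre p) X (lin_ext X act p)" by (rule lin_ext_linmap[OF X act])
  have "lin_ext X act p x \<ominus>\<^bsub>X\<^esub> lin_ext X act p y = \<zero>\<^bsub>X\<^esub>"
    using linmap_minus[OF Pre_module X lm x y] lin_ext_Rel[OF X act compat d] by simp
  then show ?thesis using X.minus_zero_imp_eq linmapD(1)[OF lm] x y by blast
qed

lemma cls_push_linmap: "\<psi> \<in> fimor G p q \<Longrightarrow> linmap R (Pre p) (Quo q) (cls q \<circ> push p q \<psi>)"
  by (rule linmap_comp[OF push_linmap cls_linmap])

lemma cls_push_Rel:
  assumes \<psi>: "\<psi> \<in> fimor G p q" and F: "F \<in> Rel p"
  shows "(cls q \<circ> push p q \<psi>) F = \<zero>\<^bsub>Quo q\<^esub>"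
proof -
  have "push p q \<psi> F \<in> Rel q" by (rule push_Rel[OF \<psi> F])
  moreover have "Rel q \<subseteq> carrier (Pre q)"
    by (rule module.submoduleE(1)[OF Pre_module Rel_submodule])
  ultimately show ?thesis using cls_zero_iff by auto
qed

lemma Act_MW_cls:
  assumes \<psi>: "\<psi> \<in> fimor G p q" and x: "x \<in> carrier (Pre p)"
  shows "Act MWm p q \<psi> (cls p x) = cls q (push p q \<psi> x)"
  using linmap_qrep_cls[OF Quo_module cls_push_linmap[OF \<psi>] cls_push_Rel[OF \<psi>] x]
    by (simp add: Act_MW)

lemma Act_MW_linmap: "\<psi> \<in> fimor G p q \<Longrightarrow> linmap R (Quo p) (Quo q) (Act MWm p q \<psi>)"
  using linmap_qrep[OF Quo_module cls_push_linmap cls_push_Rel] by (simp add: Act_MW[abs_def])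

lemma Act_MW_from_deg:
  assumes \<psi>: "\<psi> \<in> fimor G n p" and A: "A \<in> carrier (Quo n)"
  shows "Act MWm n p \<psi> A = cls p (single p \<psi> (collapse (qrep A)))"
proof -
  have r: "qrep A \<in> carrier (Pre n)" using qrep_closed[OF A] .
  show ?thesis unfolding Act_MW
    using cls_eq_iff push_collapse_diff_Rel[OF \<psi> r] push_closed[OF \<psi> r]
      single_closed[OF \<psi> collapse_closed[OF r]]
    by blast
qed

lemma cls_single_eq_Act:
  assumes \<phi>: "\<phi> \<in> fimor G n p" and w: "w \<in> carrier W"
  shows "cls p (single p \<phi> w) = Act MWm n p \<phi> (cls n (single n (fiid G n) w))"
  using Act_MW_cls[OF \<phi> single_closed[OF fiid_closed w]] push_single[OF \<phi> fiid_closed w]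
      ficomp_fiid_right[OF \<phi>] by simp

lemma cls_collapse_qrep:
  assumes A: "A \<in> carrier (Quo n)"
  shows "cls n (single n (fiid G n) (collapse (qrep A))) = A"
proof -
  have r: "qrep A \<in> carrier (Pre n)" using qrep_closed[OF A] .
  have "cls n (qrep A) = cls n (single n (fiid G n) (collapse (qrep A)))"
    using cls_eq_iff collapse_diff_Rel[OF r] r single_closed[OF fiid_closed collapse_closed[OF r]]
      by blast
  then show ?thesis using cls_qrep[OF A] by simp
qed

lemma collapse_qrep_zero:
  assumes A: "A \<in> carrier (Quo n)" and e: "collapse (qrep A) = \<zero>\<^bsub>W\<^esub>"
  shows "A = \<zero>\<^bsub>Quo n\<^esub>"
  using cls_zero_iff[OF qrep_closed[OF A]] collapse_zero_imp_Rel[OF qrep_closed[OF A] e]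
      cls_qrep[OF A] by simp

lemma collapse_qrep_linmap: "linmap R (Quo n) W (\<lambda>A. collapse (qrep A))"
  by (rule linmap_qrep[OF W_module collapse_linmap collapse_Rel])

end

lemma (in fi_group) MW_dataI: "cring R \<Longrightarrow> grp_mod R G n W \<rho> \<Longrightarrow> MW_data G R W n \<rho>"
  by (intro MW_data.intro Mpre_family.intro Mpre_family_axioms.intro MW_data_axioms.intro
      fi_group_axioms)
    (simp_all add: grp_mod_def)

lemma selfmod_module: "cring R \<Longrightarrow> module R (selfmod R)"
proof -
  assume R: "cring R"
  interpret R: cring R by fact
  have "abelian_group (selfmod R)"
    by (rule abelian_groupI) (auto simp: selfmod_def R.a_ac intro: R.l_neg)
  then show ?thesis
    by (rule moduleI[OF R]) (auto simp: selfmod_def R.l_distr R.r_distr R.m_assoc)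
qed

context fi_group
begin

lemma kG_grp_mod:
  assumes R: "cring R" shows "grp_mod R G k (kG R G k) (kG_act R G k)"
proof -
  interpret S: Mpre_family G R "selfmod R" k
    by (intro Mpre_family.intro Mpre_family_axioms.intro fi_group_axioms R selfmod_module)
  have "kG R G k = S.Pre k" by (simp add: kG_def Mpre_def)
  then show ?thesis unfolding grp_mod_def kG_act_def
    using S.Pre_module S.push_linmap S.push_fiid S.push_comp by auto
qed

lemma Mn_module: "cring R \<Longrightarrow> module R (Obj (Mn R G k) p)"
  using MW_data.Quo_module[OF MW_dataI[OF _ kG_grp_mod]] by (simp add: Mn_def MW_def)

lemma Mn_Act_zero:
  assumes "cring R" and "\<phi> \<in> fimor G q p"
  shows "Act (Mn R G k) q p \<phi> \<zero>\<^bsub>Obj (Mn R G k) q\<^esub> = \<zero>\<^bsub>Obj (Mn R G k) p\<^esub>"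
proof -
  interpret K: MW_data G R "kG R G k" k "kG_act R G k"
    by (rule MW_dataI[OF assms(1) kG_grp_mod[OF assms(1)]])
  show ?thesis
    using linmap_zero[OF K.Quo_module K.Quo_module K.Act_MW_linmap[OF assms(2)]]
      by (simp add: Mn_def K.Obj_MW)
qed

end

lemma Obj_dsumfig: "Obj (dsumfig R I M) p = dsum R I (\<lambda>i. Obj (M i) p)"
  by (simp add: dsumfig_def)

lemma dsumfig_Act_dsingle:
  assumes "\<And>j. j \<in> I \<Longrightarrow> Act (M j) p q \<phi> \<zero>\<^bsub>Obj (M j) p\<^esub> = \<zero>\<^bsub>Obj (M j) q\<^esub>"
  shows "Act (dsumfig R I M) p q \<phi> (dsingle I (\<lambda>j. Obj (M j) p) i x)
       = dsingle I (\<lambda>j. Obj (M j) q) i (Act (M i) p q \<phi> x)"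
  using assms by (auto simp: dsumfig_def dsingle_def fun_eq_iff)

section \<open>The counit M(X_m) \<rightarrow> X\<close>

locale fig_counit = fi_group G for G :: "'g monoid" (structure) +
  fixes R :: "'k ring" and m :: nat and X :: "('k, 'g, 'x) figmod"
  assumes R: "cring R" and X: "fig_module R G X"
begin

lemma X_module: "module R (Obj X p)"
  using X by (simp add: fig_module_def)

lemma X_Act_linmap: "\<phi> \<in> fimor G p q \<Longrightarrow> linmap R (Obj X p) (Obj X q) (Act X p q \<phi>)"
  using X by (simp add: fig_module_def)

lemma X_Act_fiid: "x \<in> carrier (Obj X p) \<Longrightarrow> Act X p p (fiid G p) x = x"
  using X by (simp add: fig_module_def)

lemma X_Act_comp: "\<psi> \<in> fimor G n k \<Longrightarrow> \<phi> \<in> fimor G k p \<Longrightarrow> x \<in> carrier (Obj X n) \<Longrightarrow>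
    Act X n p (ficomp G n \<phi> \<psi>) x = Act X k p \<phi> (Act X n k \<psi> x)"
  using X unfolding fig_module_def by blast

lemma X_grp_mod: "grp_mod R G m (Obj X m) (Act X m m)"
  unfolding grp_mod_def using X_module X_Act_linmap X_Act_fiid X_Act_comp by blast

sublocale M: MW_data G R "Obj X m" m "Act X m m"
  by (rule MW_dataI[OF R X_grp_mod])

definition counit :: "nat \<Rightarrow> ('g fimor \<Rightarrow> 'x) \<Rightarrow> 'x" where
  "counit p = M.lin_ext (Obj X p) (Act X m p) p"

lemma counit_linmap: "linmap R (M.Pre p) (Obj X p) (counit p)"
  unfolding counit_def by (rule M.lin_ext_linmap[OF X_module X_Act_linmap])

lemma counit_closed: "H \<in> carrier (M.Pre p) \<Longrightarrow> counit p H \<in> carrier (Obj X p)"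
  using linmapD(1)[OF counit_linmap] .

lemma counit_single:
  "\<phi> \<in> fimor G m p \<Longrightarrow> w \<in> carrier (Obj X m) \<Longrightarrow> counit p (M.single p \<phi> w) = Act X m p \<phi> w"
  unfolding counit_def by (rule M.lin_ext_single[OF X_module X_Act_linmap])

lemma counit_Rel: "H \<in> M.Rel p \<Longrightarrow> counit p H = \<zero>\<^bsub>Obj X p\<^esub>"
  unfolding counit_def by (rule M.lin_ext_Rel[OF X_module X_Act_linmap X_Act_comp])

lemma counit_qrep_cls: "H \<in> carrier (M.Pre p) \<Longrightarrow> counit p (qrep (M.cls p H)) = counit p H"
  by (rule M.linmap_qrep_cls[OF X_module counit_linmap counit_Rel])

lemma counit_Rel_eq:
  "x \<in> carrier (M.Pre p) \<Longrightarrow> y \<in> carrier (M.Pre p) \<Longrightarrow> x \<ominus>\<^bsub>M.Pre p\<^esub> y \<in> M.Rel p \<Longrightarrow>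
    counit p x = counit p y"
  unfolding counit_def by (rule M.lin_ext_Rel_eq[OF X_module X_Act_linmap X_Act_comp])

lemma counit_normal_form: "H \<in> carrier (M.Pre p) \<Longrightarrow> counit p (M.normal_form p H) = counit p H"
  using counit_Rel_eq[OF _ M.normal_form_closed M.normal_form_diff_Rel] by simp

lemma counit_natural:
  assumes \<psi>: "\<psi> \<in> fimor G p q" and H: "H \<in> carrier (M.Pre p)"
  shows "counit q (M.push p q \<psi> H) = Act X p q \<psi> (counit p H)"
proof -
  have "(counit q \<circ> M.push p q \<psi>) H = (Act X p q \<psi> \<circ> counit p) H"
  proof (rule M.linmap_Pre_eqI[OF X_module _ _ _ H])
    show "linmap R (M.Pre p) (Obj X q) (counit q \<circ> M.push p q \<psi>)"
      by (rule linmap_comp[OF M.push_linmap[OF \<psi>] counit_linmap])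
    show "linmap R (M.Pre p) (Obj X q) (Act X p q \<psi> \<circ> counit p)"
      by (rule linmap_comp[OF counit_linmap X_Act_linmap[OF \<psi>]])
    fix \<phi> w assume \<phi>: "\<phi> \<in> fimor G m p" and w: "w \<in> carrier (Obj X m)"
    show "(counit q \<circ> M.push p q \<psi>) (M.single p \<phi> w) = (Act X p q \<psi> \<circ> counit p) (M.single p \<phi> w)"
      using M.push_single[OF \<psi> \<phi> w] counit_single[OF ficomp_closed[OF \<phi> \<psi>] w]
        counit_single[OF \<phi> w] X_Act_comp[OF \<phi> \<psi> w]
      by simp
  qed
  then show ?thesis by simp
qed

lemma counit_image_submodule: "submodule (counit p ` carrier (M.Pre p)) R (Obj X p)"
  by (rule linmap_image_submodule[OF M.Pre_module X_module counit_linmap])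

lemma Act_in_counit_image:
  assumes below: "\<And>k x. k < m \<Longrightarrow> x \<in> carrier (Obj X k) \<Longrightarrow> x = \<zero>\<^bsub>Obj X k\<^esub>"
    and k: "k \<le> m" and \<phi>: "\<phi> \<in> fimor G k p" and x: "x \<in> carrier (Obj X k)"
  shows "Act X k p \<phi> x \<in> counit p ` carrier (M.Pre p)"
proof (cases "k = m")
  case True
  show ?thesis
  proof (rule image_eqI)
    show "Act X k p \<phi> x = counit p (M.single p \<phi> x)" using counit_single \<phi> x True by simp
    show "M.single p \<phi> x \<in> carrier (M.Pre p)" using M.single_closed \<phi> x True by simp
  qed
next
  case False
  with k have "k < m" by simp
  then have "x = \<zero>\<^bsub>Obj X k\<^esub>" using below x by blast
  then show ?thesis
    using linmap_zero[OF X_module X_module X_Act_linmap[OF \<phi>]]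
      submodule_zero_closed[OF X_module counit_image_submodule] by simp
qed

text \<open>The image of a generator of M(k) under a map to X is the image of an element of X_k, and
  elements of X_k with k \<le> m are hit by the counit.\<close>

lemma Mn_cover_in_counit_image:
  assumes below: "\<And>k x. k < m \<Longrightarrow> x \<in> carrier (Obj X k) \<Longrightarrow> x = \<zero>\<^bsub>Obj X k\<^esub>"
    and nf: "\<forall>i\<in>I. nf i \<le> m" and \<eta>: "fig_morph R G (dsumfig R I (\<lambda>i. Mn R G (nf i))) X \<eta>"
    and i: "i \<in> I" and A: "A \<in> carrier (Obj (Mn R G (nf i)) p)"
  shows "\<eta> p (dsingle I (\<lambda>i. Obj (Mn R G (nf i)) p) i A) \<in> counit p ` carrier (M.Pre p)"
proof -
  let ?O = "\<lambda>q i. Obj (Mn R G (nf i)) q"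
  define k where "k = nf i"
  interpret K: MW_data G R "kG R G k" k "kG_act R G k" by (rule MW_dataI[OF R kG_grp_mod[OF R]])
  have O: "?O q i = K.Quo q" for q unfolding k_def[symmetric] Mn_def K.Obj_MW ..
  have D: "dsum_family R I (?O q)" for q by (rule dsum_family.intro[OF R Mn_module[OF R]])
  have \<eta>_linmap: "linmap R (dsum R I (?O q)) (Obj X q) (\<eta> q)" for q
    using \<eta> by (simp add: fig_morph_def Obj_dsumfig)
  have L: "linmap R (K.Pre p) (Obj X p) (\<eta> p \<circ> dsingle I (?O p) i \<circ> K.cls p)"
    using linmap_comp[OF linmap_comp[OF K.cls_linmap dsum_family.dsingle_linmap[OF D i, unfolded O]]
        \<eta>_linmap]
    by (simp add: comp_assoc)
  obtain x where x: "x \<in> carrier (K.Pre p)" and A: "A = K.cls p x"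
    using A by (auto simp: O K.Quo_carrier)
  have "(\<eta> p \<circ> dsingle I (?O p) i \<circ> K.cls p) x \<in> counit p ` carrier (M.Pre p)"
  proof (rule K.linmap_Pre_mem[OF X_module L counit_image_submodule _ x])
    fix \<phi> w assume \<phi>: "\<phi> \<in> fimor G k p" and w: "w \<in> carrier (kG R G k)"
    define B where "B = K.cls k (K.single k (fiid G k) w)"
    have B: "dsingle I (?O k) i B \<in> carrier (dsum R I (?O k))"
      using dsum_family.dsingle_carrier[OF D i] K.cls_closed[OF K.single_closed[OF fiid_closed w]]
      by (simp add: B_def O)
    have "Act (dsumfig R I (\<lambda>i. Mn R G (nf i))) k p \<phi> (dsingle I (?O k) i B)
        = dsingle I (?O p) i (Act (Mn R G (nf i)) k p \<phi> B)"
      by (rule dsumfig_Act_dsingle) (rule Mn_Act_zero[OF R \<phi>])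
    also have "Act (Mn R G (nf i)) k p \<phi> B = K.cls p (K.single p \<phi> w)"
      using K.cls_single_eq_Act[OF \<phi> w] by (simp add: B_def k_def Mn_def)
    finally have "Act (dsumfig R I (\<lambda>i. Mn R G (nf i))) k p \<phi> (dsingle I (?O k) i B)
        = dsingle I (?O p) i (K.cls p (K.single p \<phi> w))" .
    then have "\<eta> p (dsingle I (?O p) i (K.cls p (K.single p \<phi> w)))
        = Act X k p \<phi> (\<eta> k (dsingle I (?O k) i B))"
      using \<eta> B \<phi> unfolding fig_morph_def Obj_dsumfig by metis
    then show "(\<eta> p \<circ> dsingle I (?O p) i \<circ> K.cls p) (K.single p \<phi> w) \<in> counit p ` carrier (M.Pre p)"
      using Act_in_counit_image[OF below _ \<phi> linmapD(1)[OF \<eta>_linmap B]] nf i by (simp add: k_def)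
  qed
  then show ?thesis using A by simp
qed

lemma counit_surj_if_gen_deg:
  assumes below: "\<And>k x. k < m \<Longrightarrow> x \<in> carrier (Obj X k) \<Longrightarrow> x = \<zero>\<^bsub>Obj X k\<^esub>"
    and gen: "gen_deg R G TYPE('i) X m" and u: "u \<in> carrier (Obj X p)"
  shows "\<exists>H\<in>carrier (M.Pre p). counit p H = u"
proof -
  from gen obtain I :: "'i set" and nf \<eta> where nf: "\<forall>i\<in>I. nf i \<le> m"
    and \<eta>: "fig_morph R G (dsumfig R I (\<lambda>i. Mn R G (nf i))) X \<eta>"
    and onto: "\<forall>q. \<eta> q ` carrier (Obj (dsumfig R I (\<lambda>i. Mn R G (nf i))) q) = carrier (Obj X q)"
    unfolding gen_deg_def by blast
  let ?O = "\<lambda>i. Obj (Mn R G (nf i)) p"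
  have "u \<in> \<eta> p ` carrier (Obj (dsumfig R I (\<lambda>i. Mn R G (nf i))) p)" using onto u by simp
  then obtain F where F: "F \<in> carrier (dsum R I ?O)" and uF: "u = \<eta> p F"
    unfolding Obj_dsumfig by blast
  have "\<eta> p F \<in> counit p ` carrier (M.Pre p)"
  proof (rule dsum_family.linmap_dsum_mem[OF _ X_module _ counit_image_submodule _ F])
    show "dsum_family R I ?O" by (rule dsum_family.intro[OF R Mn_module[OF R]])
    show "linmap R (dsum R I ?O) (Obj X p) (\<eta> p)" using \<eta> by (simp add: fig_morph_def Obj_dsumfig)
  qed (rule Mn_cover_in_counit_image[OF below nf \<eta>])
  then show ?thesis using uF by auto
qed

definition triv :: "('k, 'x) module" where
  "triv = (Obj X m)\<lparr>carrier := {\<zero>\<^bsub>Obj X m\<^esub>}\<rparr>"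

lemma triv_module: "module R triv"
proof -
  interpret Xm: module R "Obj X m" by (rule X_module)
  show ?thesis unfolding triv_def
    by (rule submodule.submodule_is_module[OF zero_submodule[OF X_module] X_module])
qed

lemma triv_grp_mod: "grp_mod R G k triv (\<lambda>_ x. x)"
  unfolding grp_mod_def using triv_module by (auto intro: linmapI)

lemma triv_MW_data: "MW_data G R triv k (\<lambda>_ x. x)"
  by (rule MW_dataI[OF R triv_grp_mod])

lemma MW_triv_singleton:
  assumes A: "A \<in> carrier (Obj (MW R G k triv (\<lambda>_ x. x)) p)"
      and B: "B \<in> carrier (Obj (MW R G k triv (\<lambda>_ x. x)) p)"
  shows "A = B"
proof -
  interpret T: MW_data G R triv k "\<lambda>_ x. x" by (rule triv_MW_data)
  have Pre_trivial: "F = \<zero>\<^bsub>T.Pre p\<^esub>" if "F \<in> carrier (T.Pre p)" for F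
  proof (rule T.Pre_eqI[OF that])
    show "\<zero>\<^bsub>T.Pre p\<^esub> \<in> carrier (T.Pre p)"
      using module.axioms(2)[OF T.Pre_module] abelian_groupE(2) by blast
    fix \<phi> assume \<phi>: "\<phi> \<in> fimor G k p"
    have "F \<phi> \<in> carrier triv" using T.Pre_coeff_closed[OF that \<phi>] .
    moreover have "carrier triv = {\<zero>\<^bsub>triv\<^esub>}" by (simp add: triv_def)
    ultimately show "F \<phi> = \<zero>\<^bsub>T.Pre p\<^esub> \<phi>" using \<phi> by (simp add: T.Pre_zero)
  qed
  show ?thesis using A B unfolding T.Obj_MW T.Quo_carrier using Pre_trivial by auto
qed

definition Wfam :: "nat \<Rightarrow> ('k, 'x) module" where
  "Wfam k = (if k = m then Obj X m else triv)"

definition \<rho>fam :: "nat \<Rightarrow> 'g fimor \<Rightarrow> 'x \<Rightarrow> 'x" where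
  "\<rho>fam k = (if k = m then Act X m m else (\<lambda>_ x. x))"

abbreviation Msum where "Msum k \<equiv> MW R G k (Wfam k) (\<rho>fam k)"
abbreviation Dsum where "Dsum \<equiv> dsumfig R (UNIV :: nat set) Msum"

definition counit_sum :: "nat \<Rightarrow> (nat \<Rightarrow> ('g fimor \<Rightarrow> 'x) set) \<Rightarrow> 'x" where
  "counit_sum p F = counit p (qrep (F m))"

lemma grp_mod_Wfam: "grp_mod R G k (Wfam k) (\<rho>fam k)"
  using X_grp_mod triv_grp_mod by (simp add: Wfam_def \<rho>fam_def)

lemma Msum_deg: "Msum m = M.MWm"
  by (simp add: Wfam_def \<rho>fam_def)

lemma Msum_other: "k \<noteq> m \<Longrightarrow> Msum k = MW R G k triv (\<lambda>_ x. x)"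
  by (simp add: Wfam_def \<rho>fam_def)

lemma Obj_Dsum: "Obj Dsum p = dsum R UNIV (\<lambda>k. Obj (Msum k) p)"
  by (simp add: dsumfig_def)

lemma Dsum_component_closed: "F \<in> carrier (Obj Dsum p) \<Longrightarrow> F k \<in> carrier (Obj (Msum k) p)"
  by (simp add: Obj_Dsum dsum_carrier)

lemma Dsum_deg_closed: "F \<in> carrier (Obj Dsum p) \<Longrightarrow> F m \<in> carrier (M.Quo p)"
  using Dsum_component_closed[of F p m] by (simp add: Msum_deg M.Obj_MW)

lemma Dsum_deg_linmap: "linmap R (Obj Dsum p) (M.Quo p) (\<lambda>F. F m)"
  by (rule linmapI) (simp_all add: Dsum_deg_closed Obj_Dsum dsum_add dsum_smult Msum_deg M.Obj_MW)

lemma counit_sum_fig_morph: "fig_morph R G Dsum X counit_sum"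
  unfolding fig_morph_def
proof (intro conjI allI ballI)
  fix p
  show "linmap R (Obj Dsum p) (Obj X p) (counit_sum p)"
    using linmap_comp[OF Dsum_deg_linmap M.linmap_qrep[OF X_module counit_linmap counit_Rel]]
    by (simp add: comp_def counit_sum_def[abs_def])
next
  fix p q \<psi> F assume \<psi>: "\<psi> \<in> fimor G p q" and F: "F \<in> carrier (Obj Dsum p)"
  have rF: "qrep (F m) \<in> carrier (M.Pre p)" using M.qrep_closed Dsum_deg_closed[OF F] .
  have "Act Dsum p q \<psi> F m = M.cls q (M.push p q \<psi> (qrep (F m)))"
    by (simp add: dsumfig_def Msum_deg M.Act_MW)
  then show "counit_sum q (Act Dsum p q \<psi> F) = Act X p q \<psi> (counit_sum p F)"
    unfolding counit_sum_def
      using counit_qrep_cls[OF M.push_closed[OF \<psi> rF]] counit_natural[OF \<psi> rF]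
    by simp
qed

lemma counit_sum_inj:
  assumes inj: "\<And>H. H \<in> carrier (M.Pre p) \<Longrightarrow> counit p H = \<zero>\<^bsub>Obj X p\<^esub> \<Longrightarrow> H \<in> M.Rel p"
  shows "inj_on (counit_sum p) (carrier (Obj Dsum p))"
proof (rule inj_onI)
  interpret Xp: module R "Obj X p" by (rule X_module)
  fix F H assume F: "F \<in> carrier (Obj Dsum p)" and H: "H \<in> carrier (Obj Dsum p)"
    and e: "counit_sum p F = counit_sum p H"
  have rF: "qrep (F m) \<in> carrier (M.Pre p)" and rH: "qrep (H m) \<in> carrier (M.Pre p)"
    using M.qrep_closed Dsum_deg_closed F H by blast+
  have "counit p (qrep (F m) \<ominus>\<^bsub>M.Pre p\<^esub> qrep (H m)) = \<zero>\<^bsub>Obj X p\<^esub>"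
    using linmap_minus[OF M.Pre_module X_module counit_linmap rF rH] e counit_closed[OF rH]
    by (simp add: counit_sum_def Xp.r_neg Xp.minus_eq)
  then have "qrep (F m) \<ominus>\<^bsub>M.Pre p\<^esub> qrep (H m) \<in> M.Rel p"
    using inj abelian_group.minus_closed[OF module.axioms(2)[OF M.Pre_module] rF rH] by blast
  then have Fm: "F m = H m"
    using M.cls_eq_iff[OF rF rH] M.cls_qrep[OF Dsum_deg_closed[OF F]]
      M.cls_qrep[OF Dsum_deg_closed[OF H]]
    by simp
  show "F = H"
  proof
    fix k show "F k = H k"
      using Fm MW_triv_singleton Dsum_component_closed[OF F, of k] Dsum_component_closed[OF H, of k]
        Msum_other[of k] by (cases "k = m") simp_all
  qed
qed

lemma counit_sum_surj:
  assumes surj: "\<And>u. u \<in> carrier (Obj X p) \<Longrightarrow> \<exists>H\<in>carrier (M.Pre p). counit p H = u"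
    and u: "u \<in> carrier (Obj X p)"
  shows "u \<in> counit_sum p ` carrier (Obj Dsum p)"
proof -
  obtain H where H: "H \<in> carrier (M.Pre p)" and eH: "counit p H = u" using surj[OF u] by blast
  define F where "F k = (if k = m then M.cls p H else \<zero>\<^bsub>Obj (Msum k) p\<^esub>)" for k
  have "F k \<in> carrier (Obj (Msum k) p)" for k
  proof (cases "k = m")
    case True then show ?thesis using M.cls_closed[OF H] by (simp add: F_def Msum_deg M.Obj_MW)
  next
    case False
    interpret T: MW_data G R triv k "\<lambda>_ x. x" by (rule triv_MW_data)
    show ?thesis
      using False Msum_other[OF False] abelian_groupE(2)[OF module.axioms(2)[OF T.Quo_module]]
      by (simp add: F_def T.Obj_MW)
  qed
  moreover have "dsum_supp UNIV (\<lambda>k. Obj (Msum k) p) F \<subseteq> {m}" by (auto simp: dsum_supp_def F_def)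
  ultimately have "F \<in> carrier (Obj Dsum p)"
    by (auto simp: Obj_Dsum dsum_carrier intro: finite_subset)
  moreover have "counit_sum p F = u" unfolding counit_sum_def F_def
    using counit_qrep_cls[OF H] eH by simp
  ultimately show ?thesis by blast
qed

theorem rel_proj_if_counit_bij:
  assumes surj: "\<And>p u. u \<in> carrier (Obj X p) \<Longrightarrow> \<exists>H\<in>carrier (M.Pre p). counit p H = u"
    and inj: "\<And>p H. H \<in> carrier (M.Pre p) \<Longrightarrow> counit p H = \<zero>\<^bsub>Obj X p\<^esub> \<Longrightarrow> H \<in> M.Rel p"
  shows "rel_proj R G TYPE('x) X"
proof -
  have "bij_betw (counit_sum p) (carrier (Obj Dsum p)) (carrier (Obj X p))" for p
  proof (rule bij_betw_imageI)
    show "inj_on (counit_sum p) (carrier (Obj Dsum p))" by (rule counit_sum_inj[OF inj])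
    have "linmap R (Obj Dsum p) (Obj X p) (counit_sum p)"
      using counit_sum_fig_morph by (simp add: fig_morph_def)
    then show "counit_sum p ` carrier (Obj Dsum p) = carrier (Obj X p)"
      using counit_sum_surj[OF surj] by (auto dest: linmapD(1))
  qed
  then have "fig_iso R G Dsum X"
    unfolding fig_iso_def using counit_sum_fig_morph by blast
  then show ?thesis unfolding rel_proj_def using grp_mod_Wfam by blast
qed

end

section \<open>The exact sequence 0 \<rightarrow> U \<rightarrow> M(W) \<rightarrow> V \<rightarrow> 0\<close>

definition map_coeffs :: "'g monoid \<Rightarrow> nat \<Rightarrow> nat \<Rightarrow> ('a \<Rightarrow> 'b) \<Rightarrow> ('g fimor \<Rightarrow> 'a) \<Rightarrow> 'g fimor \<Rightarrow> 'b" where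
  "map_coeffs G n p f F = (\<lambda>\<phi>. if \<phi> \<in> fimor G n p then f (F \<phi>) else undefined)"

locale coeff_map = A: Mpre_family G R W1 n + B: Mpre_family G R W2 n
  for G :: "'g monoid" (structure) and R :: "'k ring" and W1 :: "('k, 'a) module"
    and W2 :: "('k, 'b) module" and n :: nat +
  fixes f assumes f: "linmap R W1 W2 f"
begin

lemma f_zero: "f \<zero>\<^bsub>W1\<^esub> = \<zero>\<^bsub>W2\<^esub>"
  using linmap_zero[OF A.W_module B.W_module f] .

lemma map_coeffs_apply: "\<phi> \<in> fimor G n p \<Longrightarrow> map_coeffs G n p f F \<phi> = f (F \<phi>)"
  by (simp add: map_coeffs_def)

lemma map_coeffs_supp: "B.supp p (map_coeffs G n p f F) \<subseteq> A.supp p F"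
  using f_zero by (auto simp: dsum_supp_def map_coeffs_def)

lemma map_coeffs_is_normal: "A.is_normal p F \<Longrightarrow> B.is_normal p (map_coeffs G n p f F)"
  using map_coeffs_supp unfolding A.is_normal_def B.is_normal_def by blast

lemma map_coeffs_closed: "F \<in> carrier (A.Pre p) \<Longrightarrow> map_coeffs G n p f F \<in> carrier (B.Pre p)"
  using linmapD(1)[OF f] A.Pre_coeff_closed finite_subset[OF map_coeffs_supp A.supp_finite]
  by (auto simp: B.Pre_carrier map_coeffs_def)

lemma map_coeffs_linmap: "linmap R (A.Pre p) (B.Pre p) (map_coeffs G n p f)"
proof (rule linmapI)
  fix F H assume "F \<in> carrier (A.Pre p)" "H \<in> carrier (A.Pre p)"
  then show "map_coeffs G n p f (F \<oplus>\<^bsub>A.Pre p\<^esub> H) = map_coeffs G n p f F \<oplus>\<^bsub>B.Pre p\<^esub> map_coeffs G n p f H"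
    using linmapD(2)[OF f] A.Pre_coeff_closed
      by (auto simp: map_coeffs_def A.Pre_add B.Pre_add fun_eq_iff)
next
  fix a F assume "a \<in> carrier R" "F \<in> carrier (A.Pre p)"
  then show "map_coeffs G n p f (a \<odot>\<^bsub>A.Pre p\<^esub> F) = a \<odot>\<^bsub>B.Pre p\<^esub> map_coeffs G n p f F"
    using linmapD(3)[OF f] A.Pre_coeff_closed
      by (auto simp: map_coeffs_def A.Pre_smult B.Pre_smult fun_eq_iff)
qed (rule map_coeffs_closed)

lemma map_coeffs_single:
  "\<phi> \<in> fimor G n p \<Longrightarrow> w \<in> carrier W1 \<Longrightarrow> map_coeffs G n p f (A.single p \<phi> w) = B.single p \<phi> (f w)"
  using f_zero by (auto simp: map_coeffs_def dsingle_def fun_eq_iff)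

end

locale MW_short_exact = fi_group G for G :: "'g monoid" (structure) +
  fixes R :: "'k ring" and m :: nat and W :: "('k, 'w) module" and \<rho> :: "'g fimor \<Rightarrow> 'w \<Rightarrow> 'w"
    and U :: "('k, 'g, 'u) figmod" and V :: "('k, 'g, 'v) figmod"
    and \<iota> :: "nat \<Rightarrow> 'u \<Rightarrow> ('g fimor \<Rightarrow> 'w) set"
    and \<pi> :: "nat \<Rightarrow> ('g fimor \<Rightarrow> 'w) set \<Rightarrow> 'v"
  assumes R: "cring R" and W_grp_mod: "grp_mod R G m W \<rho>"
    and U_fig: "fig_module R G U" and V_fig: "fig_module R G V"
    and exact: "short_exact R G U (MW R G m W \<rho>) V \<iota> \<pi>"
begin

lemma W_module: "module R W"
  using W_grp_mod by (simp add: grp_mod_def)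

sublocale Wc: MW_data G R W m \<rho>
  by (rule MW_dataI[OF R W_grp_mod])

sublocale UX: fig_counit G R m U
  by (intro fig_counit.intro fig_counit_axioms.intro fi_group_axioms R U_fig)

sublocale VX: fig_counit G R m V
  by (intro fig_counit.intro fig_counit_axioms.intro fi_group_axioms R V_fig)

lemma \<iota>_linmap: "linmap R (Obj U p) (Wc.Quo p) (\<iota> p)"
  using exact by (simp add: short_exact_def fig_morph_def Wc.Obj_MW)

lemma \<iota>_natural:
  "\<psi> \<in> fimor G p q \<Longrightarrow> x \<in> carrier (Obj U p) \<Longrightarrow> \<iota> q (Act U p q \<psi> x) = Act Wc.MWm p q \<psi> (\<iota> p x)"
  using exact by (simp add: short_exact_def fig_morph_def)

lemma \<iota>_inj: "inj_on (\<iota> p) (carrier (Obj U p))"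
  using exact by (simp add: short_exact_def)

lemma \<iota>_image: "\<iota> p ` carrier (Obj U p) = {x \<in> carrier (Wc.Quo p). \<pi> p x = \<zero>\<^bsub>Obj V p\<^esub>}"
  using exact by (simp add: short_exact_def Wc.Obj_MW)

lemma \<pi>_linmap: "linmap R (Wc.Quo p) (Obj V p) (\<pi> p)"
  using exact by (simp add: short_exact_def fig_morph_def Wc.Obj_MW)

lemma \<pi>_natural:
  "\<psi> \<in> fimor G p q \<Longrightarrow> x \<in> carrier (Wc.Quo p) \<Longrightarrow> \<pi> q (Act Wc.MWm p q \<psi> x) = Act V p q \<psi> (\<pi> p x)"
  using exact by (simp add: short_exact_def fig_morph_def Wc.Obj_MW)

lemma \<pi>_surj: "\<pi> p ` carrier (Wc.Quo p) = carrier (Obj V p)"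
  using exact by (simp add: short_exact_def Wc.Obj_MW)

lemma U_below_deg_zero:
  assumes k: "k < m" and x: "x \<in> carrier (Obj U k)"
  shows "x = \<zero>\<^bsub>Obj U k\<^esub>"
proof -
  have "Wc.Pre k = dsum R {} (\<lambda>_. W)" using fimor_empty[OF k, of G] by (simp add: Wc.Pre_eq_dsum)
  then have "carrier (Wc.Pre k) = {\<lambda>_. undefined}" by (auto simp: dsum_carrier dsum_supp_def)
  then have "A = B" if "A \<in> carrier (Wc.Quo k)" "B \<in> carrier (Wc.Quo k)" for A B
    using that by (auto simp: Wc.Quo_carrier)
  then have "\<iota> k x = \<iota> k \<zero>\<^bsub>Obj U k\<^esub>"
    using linmapD(1)[OF \<iota>_linmap] x module.axioms(2)[OF UX.X_module, THEN abelian_groupE(2)]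
      by blast
  then show ?thesis using \<iota>_inj[of k] x module.axioms(2)[OF UX.X_module, THEN abelian_groupE(2)]
    by (auto simp: inj_on_def)
qed

text \<open>The degree-m components of the sequence, read through the isomorphism M(W)_m \<cong> W induced by
  collapse.\<close>

definition deg_incl :: "'u \<Rightarrow> 'w" where
  "deg_incl u = Wc.collapse (qrep (\<iota> m u))"
definition deg_proj :: "'w \<Rightarrow> 'v" where
  "deg_proj w = \<pi> m (Wc.cls m (Wc.single m (fiid G m) w))"

lemma deg_incl_linmap: "linmap R (Obj U m) W deg_incl"
  using linmap_comp[OF \<iota>_linmap Wc.collapse_qrep_linmap]
    by (simp add: deg_incl_def[abs_def] comp_def)

lemma deg_proj_linmap: "linmap R W (Obj V m) deg_proj"
  using linmap_comp[OF linmap_comp[OF Wc.single_linmap[OF fiid_closed] Wc.cls_linmap] \<pi>_linmap]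
  by (simp add: deg_proj_def[abs_def] comp_def)

lemma deg_incl_zero_iff:
  assumes u: "u \<in> carrier (Obj U m)" and e: "deg_incl u = \<zero>\<^bsub>W\<^esub>"
  shows "u = \<zero>\<^bsub>Obj U m\<^esub>"
proof -
  have iu: "\<iota> m u \<in> carrier (Wc.Quo m)" using linmapD(1)[OF \<iota>_linmap u] .
  have "\<iota> m u = \<zero>\<^bsub>Wc.Quo m\<^esub>" using Wc.collapse_qrep_zero[OF iu] e by (simp add: deg_incl_def)
  also have "\<dots> = \<iota> m \<zero>\<^bsub>Obj U m\<^esub>" using linmap_zero[OF UX.X_module Wc.Quo_module \<iota>_linmap] by simp
  finally show ?thesis using \<iota>_inj[of m] u module.axioms(2)[OF UX.X_module, THEN abelian_groupE(2)]
    by (auto simp: inj_on_def)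
qed

lemma deg_proj_deg_incl: "u \<in> carrier (Obj U m) \<Longrightarrow> deg_proj (deg_incl u) = \<zero>\<^bsub>Obj V m\<^esub>"
  using \<iota>_image[of m] Wc.cls_collapse_qrep[OF linmapD(1)[OF \<iota>_linmap]]
  by (auto simp: deg_proj_def deg_incl_def)

lemma deg_proj_surj: "v \<in> carrier (Obj V m) \<Longrightarrow> \<exists>w\<in>carrier W. deg_proj w = v"
proof -
  assume "v \<in> carrier (Obj V m)"
  then obtain A where A: "A \<in> carrier (Wc.Quo m)" and v: "v = \<pi> m A" using \<pi>_surj[of m] by blast
  have "deg_proj (Wc.collapse (qrep A)) = v" unfolding deg_proj_def Wc.cls_collapse_qrep[OF A] v ..
  then show ?thesis using Wc.collapse_closed[OF Wc.qrep_closed[OF A]] by blast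
qed

sublocale incl: coeff_map G R "Obj U m" W m deg_incl
  by (intro coeff_map.intro coeff_map_axioms.intro UX.M.Mpre_family_axioms Wc.Mpre_family_axioms
      deg_incl_linmap)

sublocale proj: coeff_map G R W "Obj V m" m deg_proj
  by (intro coeff_map.intro coeff_map_axioms.intro VX.M.Mpre_family_axioms Wc.Mpre_family_axioms
      deg_proj_linmap)

lemma \<iota>_counit:
  assumes H: "H \<in> carrier (UX.M.Pre p)"
  shows "\<iota> p (UX.counit p H) = Wc.cls p (map_coeffs G m p deg_incl H)"
proof -
  have "(\<iota> p \<circ> UX.counit p) H = (Wc.cls p \<circ> map_coeffs G m p deg_incl) H"
  proof (rule UX.M.linmap_Pre_eqI[OF Wc.Quo_module _ _ _ H])
    show "linmap R (UX.M.Pre p) (Wc.Quo p) (\<iota> p \<circ> UX.counit p)"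
      by (rule linmap_comp[OF UX.counit_linmap \<iota>_linmap])
    show "linmap R (UX.M.Pre p) (Wc.Quo p) (Wc.cls p \<circ> map_coeffs G m p deg_incl)"
      by (rule linmap_comp[OF incl.map_coeffs_linmap Wc.cls_linmap])
    fix \<phi> u assume \<phi>: "\<phi> \<in> fimor G m p" and u: "u \<in> carrier (Obj U m)"
    show "(\<iota> p \<circ> UX.counit p) (UX.M.single p \<phi> u)
        = (Wc.cls p \<circ> map_coeffs G m p deg_incl) (UX.M.single p \<phi> u)"
      using UX.counit_single[OF \<phi> u] \<iota>_natural[OF \<phi> u]
        Wc.Act_MW_from_deg[OF \<phi> linmapD(1)[OF \<iota>_linmap u]]
        incl.map_coeffs_single[OF \<phi> u]
      by (simp add: deg_incl_def)
  qed
  then show ?thesis by simp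
qed

lemma \<pi>_cls:
  assumes F: "F \<in> carrier (Wc.Pre p)"
  shows "\<pi> p (Wc.cls p F) = VX.counit p (map_coeffs G m p deg_proj F)"
proof -
  have "(\<pi> p \<circ> Wc.cls p) F = (VX.counit p \<circ> map_coeffs G m p deg_proj) F"
  proof (rule Wc.linmap_Pre_eqI[OF VX.X_module _ _ _ F])
    show "linmap R (Wc.Pre p) (Obj V p) (\<pi> p \<circ> Wc.cls p)"
      by (rule linmap_comp[OF Wc.cls_linmap \<pi>_linmap])
    show "linmap R (Wc.Pre p) (Obj V p) (VX.counit p \<circ> map_coeffs G m p deg_proj)"
      by (rule linmap_comp[OF proj.map_coeffs_linmap VX.counit_linmap])
    fix \<phi> w assume \<phi>: "\<phi> \<in> fimor G m p" and w: "w \<in> carrier W"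
    have B: "Wc.cls m (Wc.single m (fiid G m) w) \<in> carrier (Wc.Quo m)"
      using Wc.cls_closed[OF Wc.single_closed[OF fiid_closed w]] .
    show "(\<pi> p \<circ> Wc.cls p) (Wc.single p \<phi> w)
        = (VX.counit p \<circ> map_coeffs G m p deg_proj) (Wc.single p \<phi> w)"
      using Wc.cls_single_eq_Act[OF \<phi> w] \<pi>_natural[OF \<phi> B] proj.map_coeffs_single[OF \<phi> w]
        VX.counit_single[OF \<phi> linmapD(1)[OF deg_proj_linmap w]]
      by (simp add: deg_proj_def)
  qed
  then show ?thesis by simp
qed

lemma counit_U_surj:
  "gen_deg R G TYPE('i) U m \<Longrightarrow> u \<in> carrier (Obj U p) \<Longrightarrow> \<exists>H\<in>carrier (UX.M.Pre p). UX.counit p H = u"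
  by (rule UX.counit_surj_if_gen_deg[OF U_below_deg_zero])

lemma counit_U_inj:
  assumes H: "H \<in> carrier (UX.M.Pre p)" and e: "UX.counit p H = \<zero>\<^bsub>Obj U p\<^esub>"
  shows "H \<in> UX.M.Rel p"
proof (rule UX.M.Rel_if_normal_form_vanishes[OF H])
  let ?H = "UX.M.normal_form p H"
  have Hc: "?H \<in> carrier (UX.M.Pre p)" using UX.M.normal_form_closed[OF H] .
  let ?K = "map_coeffs G m p deg_incl ?H"
  have Kc: "?K \<in> carrier (Wc.Pre p)" using incl.map_coeffs_closed[OF Hc] .
  have "Wc.cls p ?K = \<zero>\<^bsub>Wc.Quo p\<^esub>"
    using \<iota>_counit[OF Hc] UX.counit_normal_form[OF H] e
      linmap_zero[OF UX.X_module Wc.Quo_module \<iota>_linmap]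
    by simp
  then have "?K \<in> Wc.Rel p" using Wc.cls_zero_iff[OF Kc] by simp
  moreover have "Wc.is_normal p ?K"
    by (rule incl.map_coeffs_is_normal[OF UX.M.normal_form_is_normal[OF H]])
  ultimately have K0: "?K = \<zero>\<^bsub>Wc.Pre p\<^esub>" using Wc.normal_form_fixed[OF Kc] Wc.normal_form_Rel by simp
  fix \<phi> assume \<phi>: "\<phi> \<in> fimor G m p"
  have "deg_incl (?H \<phi>) = \<zero>\<^bsub>W\<^esub>"
    using arg_cong[OF K0, of "\<lambda>F. F \<phi>"] \<phi> by (simp add: incl.map_coeffs_apply Wc.Pre_zero)
  then show "?H \<phi> = \<zero>\<^bsub>Obj U m\<^esub>" using deg_incl_zero_iff UX.M.Pre_coeff_closed[OF Hc \<phi>] by blast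
qed

lemma counit_V_surj:
  assumes v: "v \<in> carrier (Obj V p)"
  shows "\<exists>H\<in>carrier (VX.M.Pre p). VX.counit p H = v"
proof -
  obtain A where A: "A \<in> carrier (Wc.Quo p)" and vA: "v = \<pi> p A" using \<pi>_surj[of p] v by blast
  then obtain x where x: "x \<in> carrier (Wc.Pre p)" and "A = Wc.cls p x"
    by (auto simp: Wc.Quo_carrier)
  then have "v = VX.counit p (map_coeffs G m p deg_proj x)" using \<pi>_cls[OF x] vA by simp
  then show ?thesis using proj.map_coeffs_closed[OF x] by blast
qed

text \<open>Zero lifts to zero, so that lifting coefficients preserves supports.\<close>

definition lift :: "'v \<Rightarrow> 'w" where
  "lift v = (if v = \<zero>\<^bsub>Obj V m\<^esub> then \<zero>\<^bsub>W\<^esub> else (SOME w. w \<in> carrier W \<and> deg_proj w = v))"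

lemma lift_spec: "v \<in> carrier (Obj V m) \<Longrightarrow> lift v \<in> carrier W \<and> deg_proj (lift v) = v"
proof (cases "v = \<zero>\<^bsub>Obj V m\<^esub>")
  case True
  then show ?thesis
    using linmap_zero[OF W_module VX.X_module deg_proj_linmap]
      module.axioms(2)[OF W_module, THEN abelian_groupE(2)]
    by (simp add: lift_def)
next
  case False
  assume "v \<in> carrier (Obj V m)"
  then have "\<exists>w. w \<in> carrier W \<and> deg_proj w = v" using deg_proj_surj by blast
  then show ?thesis using False by (simp add: lift_def) (rule someI_ex)
qed

lemma lift_coeffs:
  assumes H: "H \<in> carrier (VX.M.Pre p)" and nH: "VX.M.is_normal p H"
  shows "map_coeffs G m p lift H \<in> carrier (Wc.Pre p)"
      and "Wc.is_normal p (map_coeffs G m p lift H)"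
    and "map_coeffs G m p deg_proj (map_coeffs G m p lift H) = H"
proof -
  let ?F = "map_coeffs G m p lift H"
  have supp: "Wc.supp p ?F \<subseteq> VX.M.supp p H" by (auto simp: dsum_supp_def map_coeffs_def lift_def)
  show Fc: "?F \<in> carrier (Wc.Pre p)"
    using lift_spec VX.M.Pre_coeff_closed[OF H] finite_subset[OF supp VX.M.supp_finite[OF H]]
    by (auto simp: Wc.Pre_carrier map_coeffs_def)
  show "Wc.is_normal p ?F" using nH supp unfolding Wc.is_normal_def VX.M.is_normal_def by blast
  show "map_coeffs G m p deg_proj ?F = H"
    by (rule VX.M.Pre_eqI[OF proj.map_coeffs_closed[OF Fc] H])
      (simp add: map_coeffs_def lift_spec[OF VX.M.Pre_coeff_closed[OF H]])
qed

text \<open>The lift F of the normal form of H represents an element of M(W)_p coming from U, so F is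
  congruent to coefficients G from U_m. Both are normal, so F = G, and deg_proj \<circ> deg_incl = 0 kills
  the normal form of H.\<close>

lemma counit_V_inj:
  assumes U_surj: "\<And>u. u \<in> carrier (Obj U p) \<Longrightarrow> \<exists>H\<in>carrier (UX.M.Pre p). UX.counit p H = u"
    and H: "H \<in> carrier (VX.M.Pre p)" and e: "VX.counit p H = \<zero>\<^bsub>Obj V p\<^esub>"
  shows "H \<in> VX.M.Rel p"
proof (rule VX.M.Rel_if_normal_form_vanishes[OF H])
  let ?H = "VX.M.normal_form p H"
  let ?F = "map_coeffs G m p lift ?H"
  note F = lift_coeffs[OF VX.M.normal_form_closed[OF H] VX.M.normal_form_is_normal[OF H]]
  have "\<pi> p (Wc.cls p ?F) = \<zero>\<^bsub>Obj V p\<^esub>"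
    using \<pi>_cls[OF F(1)] F(3) VX.counit_normal_form[OF H] e by simp
  then have "Wc.cls p ?F \<in> \<iota> p ` carrier (Obj U p)"
    using \<iota>_image[of p] Wc.cls_closed[OF F(1)] by simp
  then obtain u where u: "u \<in> carrier (Obj U p)" and iu: "\<iota> p u = Wc.cls p ?F" by blast
  obtain H' where H': "H' \<in> carrier (UX.M.Pre p)" and eH': "UX.counit p H' = u"
    using U_surj[OF u] by blast
  let ?G = "map_coeffs G m p deg_incl (UX.M.normal_form p H')"
  have Gc: "?G \<in> carrier (Wc.Pre p)"
    using incl.map_coeffs_closed[OF UX.M.normal_form_closed[OF H']] .
  have "Wc.cls p ?F = Wc.cls p ?G"
    using iu \<iota>_counit[OF UX.M.normal_form_closed[OF H']] UX.counit_normal_form[OF H'] eH' by simp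
  then have FG: "?F = ?G"
    using Wc.normal_eq_if_diff_Rel[OF F(1) Gc F(2)
        incl.map_coeffs_is_normal[OF UX.M.normal_form_is_normal[OF H']]]
      Wc.cls_eq_iff[OF F(1) Gc] by simp
  fix \<phi> assume \<phi>: "\<phi> \<in> fimor G m p"
  have "?H \<phi> = deg_proj (?F \<phi>)"
    using arg_cong[OF F(3), of "\<lambda>F. F \<phi>"] \<phi> by (simp add: map_coeffs_def)
  also have "\<dots> = deg_proj (deg_incl (UX.M.normal_form p H' \<phi>))"
    using FG \<phi> by (simp add: map_coeffs_def)
  also have "\<dots> = \<zero>\<^bsub>Obj V m\<^esub>"
    using deg_proj_deg_incl[OF UX.M.Pre_coeff_closed[OF UX.M.normal_form_closed[OF H'] \<phi>]] .
  finally show "?H \<phi> = \<zero>\<^bsub>Obj V m\<^esub>" .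
qed

end

theorem mainTheorem15:
  fixes R :: "'k ring" and G :: "'g monoid" and m :: nat
    and W :: "('k, 'w) module" and \<rho> :: "'g fimor \<Rightarrow> 'w \<Rightarrow> 'w"
    and U :: "('k, 'g, 'u) figmod" and V :: "('k, 'g, 'v) figmod"
    and \<iota> :: "nat \<Rightarrow> 'u \<Rightarrow> ('g fimor \<Rightarrow> 'w) set"
    and \<pi> :: "nat \<Rightarrow> ('g fimor \<Rightarrow> 'w) set \<Rightarrow> 'v"
  assumes "cring R" and "group G"
    and "grp_mod R G m W \<rho>"
    and "fig_module R G U" and "fig_module R G V"
    and "short_exact R G U (MW R G m W \<rho>) V \<iota> \<pi>"
    and "gen_deg R G TYPE('i) U m"
  shows "rel_proj R G TYPE('u) U \<and> rel_proj R G TYPE('v) V"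
proof -
  interpret MW_short_exact G R m W \<rho> U V \<iota> \<pi>
    using assms(1-6) by (intro MW_short_exact.intro MW_short_exact_axioms.intro fi_group.intro)
  have U_surj: "\<And>p u. u \<in> carrier (Obj U p) \<Longrightarrow> \<exists>H\<in>carrier (UX.M.Pre p). UX.counit p H = u"
    by (rule counit_U_surj[OF assms(7)])
  have "rel_proj R G TYPE('u) U" by (rule UX.rel_proj_if_counit_bij[OF U_surj counit_U_inj])
  moreover have "rel_proj R G TYPE('v) V"
    by (rule VX.rel_proj_if_counit_bij[OF counit_V_surj counit_V_inj[OF U_surj]])
  ultimately show ?thesis ..
qed

end
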